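(* Let $M>1$, $\tau>0$, $\kappa\in(0,1)$, $T>0$. Let $p\in C^2(\mathbb{R})$ be monotonically increasing with values in $(p_{min},1]$, let $\varepsilon>0$, $p_\varepsilon=\frac{p+\varepsilon}{1+\varepsilon}$, with $|p_\varepsilon'|\le c_p(1-p_\varepsilon)$, $|p_\varepsilon''|\le c_p(1-p_\varepsilon)$ for some $c_p>0$. Let $g_0\in H^1(\mathbb{R})$, $g_0\ge0$, $\int g_0/p_\varepsilon\,dx=1$, $\int e^{4|x|}g_0^2/p_\varepsilon\,dx<\infty$, $\int e^{4|x|}|\partial_xg_0|^2\,dx<\infty$. Let $\tilde c,\tilde d$ be functions on $[0,T]$, $\tilde d$ differentiable, with $\inf_{[0,T]}\tilde d>0$, $\sup_{[0,T]}\{|\tilde c|+\tilde d+|\tilde d'|\}<\infty$, and let $g$ be the unique strong solution (with $g\ge0$, $\int g/p_\varepsilon\,dx=1$) of $\partial_tg+\tilde c(t)p_\varepsilon\partial_xg-\tilde d(t)p_\varepsilon\partial^2_{xx}g=0$, $g(\cdot,0)=g_0$. Let $\alpha(t)=\int_{\mathbb{R}}g(x,t)\,dx$, $a(t)=\kappa-\alpha(t)$, $b(t)=\alpha(t)(1-\alpha(t))$ and $d(t)=\frac{(M-1)^2}{2}\big(a^2(t)+\frac{b(t)}{M-1}\big)$. Then \[ d(t)\ge\frac{(M-1)\beta(0)}{2}e^{-c_0t}>0,\qquad t>0, \] where $\beta(0)=\int_{\mathbb{R}}(1-p_\varepsilon(x))g_0(x)\,dx$ and $c_0$ is a constant depending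 only on $c_p$ and on $\sup_{[0,T]}|\tilde c|$, $\sup_{[0,T]}\tilde d$ (the constant for which $\beta(t)=\int(1-p_\varepsilon)g\,dx$ satisfies $|\beta'|\le c_0\beta$). *)

theory Defs
  imports "HOL-Analysis.Analysis"
begin

definition test_fun :: "(real \<Rightarrow> real) \<Rightarrow> bool" where
  "test_fun \<phi> \<longleftrightarrow>
     (\<forall>k x. ((deriv ^^ k) \<phi>) differentiable (at x)) \<and>
     (\<exists>R. \<forall>x. R < \<bar>x\<bar> \<longrightarrow> \<phi> x = 0)"

definition loc_int :: "(real \<Rightarrow> real) \<Rightarrow> bool" where
  "loc_int u \<longleftrightarrow> (\<forall>a b. set_integrable lborel {a..b} u)"

definition weak_deriv :: "(real \<Rightarrow> real) \<Rightarrow> (real \<Rightarrow> real) \<Rightarrow> bool" where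
  "weak_deriv u v \<longleftrightarrow> loc_int u \<and> loc_int v \<and>
     (\<forall>\<phi>. test_fun \<phi> \<longrightarrow>
        (\<integral>x. u x * deriv \<phi> x \<partial>lborel) = - (\<integral>x. v x * \<phi> x \<partial>lborel))"

definition L2 :: "(real \<Rightarrow> real) \<Rightarrow> bool" where
  "L2 u \<longleftrightarrow> u \<in> borel_measurable lborel \<and> integrable lborel (\<lambda>x. (u x)\<^sup>2)"

definition H1 :: "(real \<Rightarrow> real) \<Rightarrow> (real \<Rightarrow> real) \<Rightarrow> bool" where
  "H1 u u' \<longleftrightarrow> L2 u \<and> L2 u' \<and> weak_deriv u u'"

definition C2 :: "(real \<Rightarrow> real) \<Rightarrow> bool" where
  "C2 f \<longleftrightarrow> (\<forall>x. f differentiable (at x)) \<and> (\<forall>x. deriv f differentiable (at x))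
            \<and> continuous_on UNIV (deriv (deriv f))"

definition L2_strip :: "real \<Rightarrow> (real \<Rightarrow> real \<Rightarrow> real) \<Rightarrow> bool" where
  "L2_strip T u \<longleftrightarrow> (\<lambda>(x,t). u x t) \<in> borel_measurable lborel \<and>
     set_integrable lborel (UNIV \<times> {0<..<T}) (\<lambda>(x,t). (u x t)\<^sup>2)"

text \<open>Strong solution g (with strong derivatives gx = \<partial>_x g, gxx = \<partial>^2_xx g, gt = \<partial>_t g)
  on R x (0,T) of  g_t + c(t) q(x) g_x - d(t) q(x) g_xx = 0,  g(.,0) = g0,
  in the class W^{2,1}_2 = L^2(0,T;H^2(R)) \<inter> H^1(0,T;L^2(R)).
  The representative of g is the one continuous in time with values in L^2:
  g(.,t) = g0 + \<integral>_0^t gt(.,s) ds  for every t in [0,T].\<close>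
definition strong_solution ::
  "real \<Rightarrow> (real \<Rightarrow> real) \<Rightarrow> (real \<Rightarrow> real) \<Rightarrow> (real \<Rightarrow> real) \<Rightarrow> (real \<Rightarrow> real) \<Rightarrow>
   (real \<Rightarrow> real \<Rightarrow> real) \<Rightarrow> (real \<Rightarrow> real \<Rightarrow> real) \<Rightarrow> (real \<Rightarrow> real \<Rightarrow> real) \<Rightarrow>
   (real \<Rightarrow> real \<Rightarrow> real) \<Rightarrow> bool" where
  "strong_solution T c d q g0 g gx gxx gt \<longleftrightarrow>
     L2_strip T g \<and> L2_strip T gx \<and> L2_strip T gxx \<and> L2_strip T gt \<and>
     (AE t in lborel. t \<in> {0<..<T} \<longrightarrow>
        weak_deriv (\<lambda>x. g x t) (\<lambda>x. gx x t) \<and> weak_deriv (\<lambda>x. gx x t) (\<lambda>x. gxx x t)) \<and>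
     (\<forall>t\<in>{0..T}. AE x in lborel. g x t = g0 x + (LINT s:{0..t}|lborel. gt x s)) \<and>
     (AE z in lborel. z \<in> UNIV \<times> {0<..<T} \<longrightarrow>
        (case z of (x,t) \<Rightarrow> gt x t + c t * q x * gx x t - d t * q x * gxx x t = 0))"

end

theory Submission
  imports Defs "HOL-Computational_Algebra.Polynomial"
begin

text \<open>
  Write \<open>\<alpha>(t) = \<integral> g(t)\<close> and \<open>\<beta>(t) = \<integral> (1 - p\<^sub>\<epsilon>) g(t)\<close>. Testing the equation against \<open>1 - p\<^sub>\<epsilon>\<close> and
  integrating by parts twice moves all derivatives onto \<open>p\<^sub>\<epsilon> (1 - p\<^sub>\<epsilon>)\<close>, whose first two derivatives
  are bounded by multiples of \<open>1 - p\<^sub>\<epsilon>\<close>; hence \<open>\<beta>' \<ge> - c\<^sub>0 \<beta>\<close> and \<open>\<beta>(t) \<ge> \<beta>(0) exp (- c\<^sub>0 t)\<close>.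
  This is made rigorous with the cutoffs \<open>\<eta>(x / R)\<close>, whose error terms are \<open>O(1 / R)\<close>, and an integral
  form of Gronwall's lemma. On the other hand \<open>\<integral> g / p\<^sub>\<epsilon> = 1\<close> and Cauchy-Schwarz give
  \<open>\<alpha>\<^sup>2 \<le> \<integral> p\<^sub>\<epsilon> g\<close>, i.e. \<open>\<beta> \<le> \<alpha> (1 - \<alpha>) \<le> 2 d / (M - 1)\<close>. Finally \<open>\<beta>(0) > 0\<close> because
  \<open>p\<^sub>\<epsilon> < 1\<close>: the bound \<open>|p\<^sub>\<epsilon>'| \<le> c\<^sub>p (1 - p\<^sub>\<epsilon>)\<close> keeps the monotone \<open>p\<^sub>\<epsilon>\<close> from reaching \<open>1\<close>
  unless it is constant.
\<close>

section \<open>Smooth functions and cutoffs\<close>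

definition Ck :: "nat \<Rightarrow> (real \<Rightarrow> real) \<Rightarrow> bool" where
  "Ck k f \<longleftrightarrow> (\<exists>F. F 0 = f \<and> (\<forall>j<k. \<forall>x. (F j has_real_derivative F (Suc j) x) (at x)))"

definition smooth :: "(real \<Rightarrow> real) \<Rightarrow> bool" where
  "smooth f \<longleftrightarrow> (\<forall>k. Ck k f)"

lemma Ck_0 [simp]: "Ck 0 f"
  unfolding Ck_def by (rule exI[of _ "\<lambda>_. f"]) simp

lemma Ck_Suc: "Ck (Suc k) f \<longleftrightarrow> (\<exists>f'. (\<forall>x. (f has_real_derivative f' x) (at x)) \<and> Ck k f')"
proof
  assume "Ck (Suc k) f"
  then obtain F where "F 0 = f" "\<forall>j<Suc k. \<forall>x. (F j has_real_derivative F (Suc j) x) (at x)"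
    unfolding Ck_def by blast
  then show "\<exists>f'. (\<forall>x. (f has_real_derivative f' x) (at x)) \<and> Ck k f'"
    unfolding Ck_def by (intro exI[of _ "F 1"]) (auto intro!: exI[of _ "\<lambda>j. F (Suc j)"])
next
  assume "\<exists>f'. (\<forall>x. (f has_real_derivative f' x) (at x)) \<and> Ck k f'"
  then obtain f' F where f': "\<forall>x. (f has_real_derivative f' x) (at x)" and F: "F 0 = f'"
    "\<forall>j<k. \<forall>x. (F j has_real_derivative F (Suc j) x) (at x)"
    unfolding Ck_def by blast
  show "Ck (Suc k) f"
    unfolding Ck_def
  proof (intro exI[of _ "\<lambda>j. if j = 0 then f else F (j - 1)"] conjI allI impI)
    fix j x assume "j < Suc k"
    then show "((if j = 0 then f else F (j - 1)) has_real_derivative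
      (if Suc j = 0 then f else F (Suc j - 1)) x) (at x)"
      using f' F by (cases j) auto
  qed simp
qed

lemma Ck_mono: "Ck k f \<Longrightarrow> j \<le> k \<Longrightarrow> Ck j f"
  unfolding Ck_def by force

lemma Ck_add: "Ck k f \<Longrightarrow> Ck k g \<Longrightarrow> Ck k (\<lambda>x. f x + g x)"
  unfolding Ck_def
  by (elim exE conjE, rename_tac F G, rule_tac x="\<lambda>j x. F j x + G j x" in exI)
     (auto intro!: derivative_eq_intros)

lemma Ck_cmult: "Ck k f \<Longrightarrow> Ck k (\<lambda>x. c * f x)"
  unfolding Ck_def
  by (elim exE conjE, rename_tac F, rule_tac x="\<lambda>j x. c * F j x" in exI)
     (auto intro!: derivative_eq_intros)

lemma Ck_const: "Ck k (\<lambda>x. c)"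
  unfolding Ck_def
  by (rule exI[of _ "\<lambda>j x. if j = 0 then c else 0"]) (auto intro!: derivative_eq_intros)

lemma Ck_id: "Ck k (\<lambda>x. x)"
  unfolding Ck_def
  by (rule exI[of _ "\<lambda>j x. if j = 0 then x else if j = 1 then 1 else 0"])
     (auto intro!: derivative_eq_intros)

lemma Ck_affine: "Ck k f \<Longrightarrow> Ck k (\<lambda>x. f (a * x + b))"
proof -
  assume "Ck k f"
  then obtain F where F: "F 0 = f" "\<forall>j<k. \<forall>x. (F j has_real_derivative F (Suc j) x) (at x)"
    unfolding Ck_def by blast
  have "((\<lambda>x. a ^ j * F j (a * x + b)) has_real_derivative a ^ Suc j * F (Suc j) (a * x + b)) (at x)"
    if "j < k" for j x
  proof -
    have "((\<lambda>x. F j (a * x + b)) has_real_derivative F (Suc j) (a * x + b) * a) (at x)"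
      using F(2) that by (intro DERIV_chain2[where g="\<lambda>x. a * x + b"]) (auto intro!: derivative_eq_intros)
    from DERIV_cmult[OF this, of "a ^ j"] show ?thesis by (simp add: mult_ac)
  qed
  then show ?thesis
    unfolding Ck_def using F(1) by (intro exI[of _ "\<lambda>j x. a ^ j * F j (a * x + b)"]) auto
qed

lemma Ck_mult: "Ck k f \<Longrightarrow> Ck k g \<Longrightarrow> Ck k (\<lambda>x. f x * g x)"
proof (induction k arbitrary: f g)
  case (Suc k)
  obtain f' where f': "\<forall>x. (f has_real_derivative f' x) (at x)" "Ck k f'"
    using Suc.prems(1) Ck_Suc by blast
  obtain g' where g': "\<forall>x. (g has_real_derivative g' x) (at x)" "Ck k g'"
    using Suc.prems(2) Ck_Suc by blast
  have "Ck k (\<lambda>x. f' x * g x + f x * g' x)"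
    using Suc Ck_mono f' g' by (intro Ck_add) auto
  moreover have "\<forall>x. ((\<lambda>x. f x * g x) has_real_derivative f' x * g x + f x * g' x) (at x)"
    using f' g' by (auto intro!: derivative_eq_intros)
  ultimately show ?case
    unfolding Ck_Suc by (intro exI[of _ "\<lambda>x. f' x * g x + f x * g' x"]) auto
qed simp

lemma Ck_power: "Ck k f \<Longrightarrow> Ck k (\<lambda>x. f x ^ n)"
  by (induction n) (auto intro: Ck_mult Ck_const)

lemma Ck_sum: "(\<And>i. i \<in> A \<Longrightarrow> Ck k (f i)) \<Longrightarrow> Ck k (\<lambda>x. \<Sum>i\<in>A. f i x)"
  by (induction A rule: infinite_finite_induct) (auto intro: Ck_add Ck_const)

lemma Ck_poly: "Ck k (\<lambda>x. \<Sum>i\<le>n. a i * x ^ i)"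
  by (intro Ck_sum Ck_cmult Ck_power Ck_id)

lemma Ck_deriv_funpow_differentiable:
  assumes "Ck k f" "j < k"
  shows "(deriv ^^ j) f differentiable (at x)"
proof -
  obtain F where F: "F 0 = f" "\<forall>j<k. \<forall>x. (F j has_real_derivative F (Suc j) x) (at x)"
    using assms unfolding Ck_def by blast
  have "(deriv ^^ j) f = F j" if "j < k" for j
    using that
  proof (induction j)
    case (Suc j)
    then show ?case
      using F by (auto intro!: ext DERIV_imp_deriv)
  qed (simp add: F)
  then show ?thesis
    using F assms(2) real_differentiable_def by metis
qed

lemma smooth_mult: "smooth f \<Longrightarrow> smooth g \<Longrightarrow> smooth (\<lambda>x. f x * g x)"
  unfolding smooth_def by (blast intro: Ck_mult)

lemma smooth_has_real_derivative: "smooth f \<Longrightarrow> (f has_real_derivative deriv f x) (at x)"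
  using Ck_Suc[of 0 f] DERIV_imp_deriv unfolding smooth_def by metis

lemma smooth_deriv: "smooth f \<Longrightarrow> smooth (deriv f)"
proof -
  assume f: "smooth f"
  show "smooth (deriv f)"
    unfolding smooth_def
  proof
    fix k
    obtain f' where f': "\<forall>x. (f has_real_derivative f' x) (at x)" "Ck k f'"
      using f Ck_Suc[of k f] unfolding smooth_def by auto
    then have "deriv f = f'"
      by (auto intro!: ext DERIV_imp_deriv)
    then show "Ck k (deriv f)"
      using f' by simp
  qed
qed

lemma smooth_continuous_on: "smooth f \<Longrightarrow> continuous_on S f"
  by (meson DERIV_isCont continuous_at_imp_continuous_on smooth_has_real_derivative)

lemma smooth_imp_test_fun:
  assumes "smooth f" "\<And>x. L < \<bar>x\<bar> \<Longrightarrow> f x = 0"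
  shows "test_fun f"
  unfolding test_fun_def using assms Ck_deriv_funpow_differentiable[of "Suc k" f k for k]
  unfolding smooth_def by blast

lemma deriv_eq_0_outside_support:
  assumes "smooth f" "\<And>x. L < \<bar>x\<bar> \<Longrightarrow> f x = 0" "L < \<bar>x\<bar>"
  shows "deriv f x = 0"
proof -
  have "(f has_real_derivative 0) (at x)"
    by (rule has_field_derivative_transform_within_open[where f="\<lambda>_. 0" and S="{y. L < \<bar>y\<bar>}"])
       (use assms in \<open>auto intro!: open_Collect_less continuous_intros\<close>)
  then show ?thesis
    by (rule DERIV_imp_deriv)
qed

lemma smooth_bounded:
  assumes "smooth f" "\<And>x. L < \<bar>x\<bar> \<Longrightarrow> f x = 0"
  obtains B where "B \<ge> 0" "\<And>x. \<bar>f x\<bar> \<le> B"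
proof -
  obtain B where B: "B \<ge> 0" "\<And>x. x \<in> {-L..L} \<Longrightarrow> norm (f x) \<le> B"
    using continuous_on_compact_bound[of "{-L..L}" f] smooth_continuous_on[OF assms(1)] by auto
  show ?thesis
  proof (rule that[of B])
    show "\<bar>f x\<bar> \<le> B" for x
      using B assms(2)[of x] by (cases "x \<in> {-L..L}") auto
  qed fact
qed

text \<open>\<open>P(1/x) e\<^sup>-\<^sup>1\<^sup>/\<^sup>x\<close> for \<open>x > 0\<close>: its derivative has the same form with \<open>P\<close> replaced by
  \<open>X\<^sup>2 (P - P')\<close>, which makes it smooth.\<close>
definition flat_exp :: "real poly \<Rightarrow> real \<Rightarrow> real" where
  "flat_exp P x = (if x > 0 then poly P (1/x) * exp (-(1/x)) else 0)"

lemma poly_mult_self_div_exp_tendsto_0: "((\<lambda>y. poly P y * y / exp y) \<longlongrightarrow> 0) at_top"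
  for P :: "real poly"
proof -
  have "poly P y * y / exp y = (\<Sum>i\<le>degree P. coeff P i * (y ^ Suc i / exp y))" for y :: real
    by (simp add: poly_altdef sum_distrib_left sum_divide_distrib mult_ac)
  then show ?thesis
    by (simp only:) (intro tendsto_null_sum tendsto_mult_right_zero tendsto_power_div_exp_0)
qed

lemma flat_exp_has_real_derivative:
  "(flat_exp P has_real_derivative flat_exp ([:0,0,1:] * (P - pderiv P)) x) (at x)"
proof (cases x "0::real" rule: linorder_cases)
  case less
  show ?thesis
    by (rule has_field_derivative_transform_within_open[where S="{..<0}" and f="\<lambda>_. 0"])
       (use less in \<open>auto simp: flat_exp_def\<close>)
next
  case equal
  have "((\<lambda>h. poly P (inverse h) * inverse h / exp (inverse h)) \<longlongrightarrow> 0) (at_right (0::real))"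
    by (rule filterlim_compose[OF poly_mult_self_div_exp_tendsto_0 filterlim_inverse_at_top_right])
  then have "((\<lambda>h. (flat_exp P (0 + h) - flat_exp P 0) / h) \<longlongrightarrow> 0) (at_right 0)"
    by (rule Lim_transform_eventually)
       (auto intro!: eventually_at_rightI[of 0 1] simp: flat_exp_def exp_minus field_simps)
  moreover have "((\<lambda>h. (flat_exp P (0 + h) - flat_exp P 0) / h) \<longlongrightarrow> 0) (at_left 0)"
    by (rule Lim_transform_eventually[of "\<lambda>_. 0"])
       (auto intro!: eventually_at_leftI[of "-1"] simp: flat_exp_def)
  ultimately show ?thesis
    using equal by (simp add: DERIV_def flat_exp_def filterlim_split_at)
next
  case greater
  have inv: "((\<lambda>x. 1/x) has_real_derivative - 1 / x\<^sup>2) (at x)"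
    using greater DERIV_inverse[of x] by (simp add: divide_inverse power2_eq_square)
  have "((\<lambda>x. poly P (1/x) * exp (-(1/x))) has_real_derivative
      poly (pderiv P) (1/x) * (- 1 / x\<^sup>2) * exp (-(1/x)) + poly P (1/x) * (exp (-(1/x)) * (1 / x\<^sup>2))) (at x)"
    using DERIV_mult[OF DERIV_chain2[where f="poly P", OF poly_DERIV inv]
        DERIV_chain2[where f=exp, OF DERIV_exp DERIV_minus[OF inv]]]
    by (simp add: mult_ac)
  also have "poly (pderiv P) (1/x) * (- 1 / x\<^sup>2) * exp (-(1/x)) + poly P (1/x) * (exp (-(1/x)) * (1 / x\<^sup>2))
      = flat_exp ([:0,0,1:] * (P - pderiv P)) x"
    using greater by (simp add: flat_exp_def field_simps power2_eq_square)
  finally show ?thesis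
    by (rule has_field_derivative_transform_within_open[where S="{0<..}"])
       (use greater in \<open>auto simp: flat_exp_def\<close>)
qed

lemma smooth_flat_exp: "smooth (flat_exp P)"
proof -
  have "Ck k (flat_exp P)" for k
    using flat_exp_has_real_derivative by (induction k arbitrary: P) (auto simp: Ck_Suc)
  then show ?thesis
    unfolding smooth_def ..
qed

definition bump :: "real \<Rightarrow> real" where
  "bump x = flat_exp 1 (1 + x) * flat_exp 1 (1 - x)"

lemma smooth_bump: "smooth bump"
proof -
  have "Ck k (\<lambda>x. flat_exp 1 (1 * x + 1) * flat_exp 1 ((-1) * x + 1))" for k
    using smooth_flat_exp unfolding smooth_def by (intro Ck_mult Ck_affine) auto
  then show ?thesis
    unfolding smooth_def bump_def by (simp add: add.commute)
qed

lemma bump_nonneg: "bump x \<ge> 0"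
  by (simp add: bump_def flat_exp_def)

lemma bump_eq_0: "1 \<le> \<bar>x\<bar> \<Longrightarrow> bump x = 0"
  by (auto simp: bump_def flat_exp_def)

lemma bump_0_pos: "bump 0 > 0"
  by (simp add: bump_def flat_exp_def)

definition cutoff :: "real \<Rightarrow> real \<Rightarrow> real" where
  "cutoff R x = bump (x / R) / bump 0"

lemma smooth_cutoff: "smooth (cutoff R)"
proof -
  have "Ck k (\<lambda>x. inverse (bump 0) * bump (inverse R * x + 0))" for k
    using smooth_bump unfolding smooth_def by (intro Ck_cmult Ck_affine) auto
  then show ?thesis
    unfolding smooth_def cutoff_def by (simp add: divide_inverse mult.commute)
qed

lemma cutoff_eq_0: "R > 0 \<Longrightarrow> R < \<bar>x\<bar> \<Longrightarrow> cutoff R x = 0"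
  by (simp add: cutoff_def bump_eq_0 abs_div)

lemma cutoff_nonneg: "cutoff R x \<ge> 0"
  by (simp add: cutoff_def bump_nonneg bump_0_pos less_imp_le)

lemma cutoff_tendsto_1: "(\<lambda>n. cutoff (real n + 1) x) \<longlonglongrightarrow> 1"
proof -
  have "(\<lambda>n. x * inverse (real (Suc n))) \<longlonglongrightarrow> x * 0"
    by (intro tendsto_intros LIMSEQ_inverse_real_of_nat)
  then have "(\<lambda>n. x / (real n + 1)) \<longlonglongrightarrow> 0"
    by (simp add: divide_inverse add.commute)
  moreover have "isCont bump 0"
    using smooth_has_real_derivative[OF smooth_bump] by (rule DERIV_isCont)
  ultimately have "(\<lambda>n. bump (x / (real n + 1)) / bump 0) \<longlonglongrightarrow> bump 0 / bump 0"
    using bump_0_pos by (intro tendsto_intros isCont_tendsto_compose[where g=bump]) auto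
  then show ?thesis
    using bump_0_pos unfolding cutoff_def by simp
qed

lemma deriv_cutoff:
  assumes "R \<noteq> 0"
  shows "deriv (cutoff R) = (\<lambda>x. deriv bump (x / R) / (bump 0 * R))"
proof
  fix x
  have "((\<lambda>x. bump (x / R)) has_real_derivative deriv bump (x / R) * (1 / R)) (at x)"
    by (rule DERIV_chain2[OF smooth_has_real_derivative[OF smooth_bump]]) (use assms in \<open>auto intro!: derivative_eq_intros\<close>)
  from DERIV_cdivide[OF this, of "bump 0"] show "deriv (cutoff R) x = deriv bump (x / R) / (bump 0 * R)"
    unfolding cutoff_def by (intro DERIV_imp_deriv) (simp add: field_simps)
qed

lemma deriv2_cutoff:
  assumes "R \<noteq> 0"
  shows "deriv (deriv (cutoff R)) x = deriv (deriv bump) (x / R) / (bump 0 * R\<^sup>2)"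
proof -
  have "((\<lambda>x. deriv bump (x / R)) has_real_derivative deriv (deriv bump) (x / R) * (1 / R)) (at x)"
    by (rule DERIV_chain2[OF smooth_has_real_derivative[OF smooth_deriv[OF smooth_bump]]])
       (use assms in \<open>auto intro!: derivative_eq_intros\<close>)
  from DERIV_cdivide[OF this, of "bump 0 * R"] show ?thesis
    unfolding deriv_cutoff[OF assms] by (intro DERIV_imp_deriv) (simp add: field_simps power2_eq_square)
qed

lemma cutoff_bounds:
  obtains H0 H1 H2 where "H1 \<ge> 0" "H2 \<ge> 0" "\<And>R x. cutoff R x \<le> H0"
    "\<And>R x. R \<ge> 1 \<Longrightarrow> \<bar>deriv (cutoff R) x\<bar> \<le> H1 / R"
    "\<And>R x. R \<ge> 1 \<Longrightarrow> \<bar>deriv (deriv (cutoff R)) x\<bar> \<le> H2 / R"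
proof -
  have supp0: "bump x = 0" if "1 < \<bar>x\<bar>" for x
    using bump_eq_0 that by simp
  have supp1: "deriv bump x = 0" if "1 < \<bar>x\<bar>" for x
    using deriv_eq_0_outside_support[OF smooth_bump supp0 that] .
  have supp2: "deriv (deriv bump) x = 0" if "1 < \<bar>x\<bar>" for x
    using deriv_eq_0_outside_support[OF smooth_deriv[OF smooth_bump] supp1 that] .
  obtain D0 where D0: "\<And>x. \<bar>bump x\<bar> \<le> D0"
    using smooth_bounded[OF smooth_bump supp0] by blast
  obtain D1 where D1: "D1 \<ge> 0" "\<And>x. \<bar>deriv bump x\<bar> \<le> D1"
    using smooth_bounded[OF smooth_deriv[OF smooth_bump] supp1] by blast
  obtain D2 where D2: "D2 \<ge> 0" "\<And>x. \<bar>deriv (deriv bump) x\<bar> \<le> D2"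
    using smooth_bounded[OF smooth_deriv[OF smooth_deriv[OF smooth_bump]] supp2] by blast
  show ?thesis
  proof (rule that[of "D1 / bump 0" "D2 / bump 0" "D0 / bump 0"])
    show "cutoff R x \<le> D0 / bump 0" for R x
      using D0[of "x / R"] bump_0_pos unfolding cutoff_def by (intro divide_right_mono) auto
    show "\<bar>deriv (cutoff R) x\<bar> \<le> D1 / bump 0 / R" if R: "R \<ge> 1" for R x
    proof -
      have "\<bar>deriv (cutoff R) x\<bar> = \<bar>deriv bump (x / R)\<bar> / (bump 0 * R)"
        using R bump_0_pos by (simp add: deriv_cutoff abs_divide)
      also have "\<dots> \<le> D1 / (bump 0 * R)"
        using D1 R bump_0_pos by (intro divide_right_mono) auto
      finally show ?thesis
        by simp
    qed
    show "\<bar>deriv (deriv (cutoff R)) x\<bar> \<le> D2 / bump 0 / R" if R: "R \<ge> 1" for R x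
    proof -
      have "\<bar>deriv (deriv (cutoff R)) x\<bar> = \<bar>deriv (deriv bump) (x / R)\<bar> / (bump 0 * R\<^sup>2)"
        using R bump_0_pos by (simp add: deriv2_cutoff abs_divide)
      also have "\<dots> \<le> D2 / (bump 0 * R)"
        using D2 R bump_0_pos by (intro frac_le) (auto simp: power2_eq_square)
      finally show ?thesis
        by simp
    qed
  qed (use D1 D2 bump_0_pos in auto)
qed

lemma integral_cutoff_tendsto:
  fixes h :: "real \<Rightarrow> real"
  assumes h: "integrable lborel h"
  shows "(\<lambda>n. \<integral>x. cutoff (real n + 1) x * h x \<partial>lborel) \<longlonglongrightarrow> (\<integral>x. h x \<partial>lborel)"
proof -
  obtain H0 where H0: "\<And>R x. cutoff R x \<le> H0"
    using cutoff_bounds by metis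
  show ?thesis
  proof (rule integral_dominated_convergence[where w="\<lambda>x. H0 * \<bar>h x\<bar>"])
    show "(\<lambda>x. cutoff (real n + 1) x * h x) \<in> borel_measurable lborel" for n
      using h smooth_continuous_on[OF smooth_cutoff]
      by (intro borel_measurable_times) (auto intro: borel_measurable_continuous_onI)
    show "AE x in lborel. (\<lambda>n. cutoff (real n + 1) x * h x) \<longlonglongrightarrow> h x"
    proof (rule AE_I2)
      fix x
      show "(\<lambda>n. cutoff (real n + 1) x * h x) \<longlonglongrightarrow> h x"
        using tendsto_mult_right[OF cutoff_tendsto_1, of x "h x"] by simp
    qed
    show "AE x in lborel. norm (cutoff (real n + 1) x * h x) \<le> H0 * \<bar>h x\<bar>" for n
      using H0 cutoff_nonneg by (intro AE_I2) (simp add: abs_mult mult_right_mono)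
  qed (use h in auto)
qed

section \<open>Integration by parts against \<open>C\<^sup>1\<close> multipliers\<close>

lemma loc_int_mult_bounded:
  fixes u G :: "real \<Rightarrow> real"
  assumes u: "loc_int u" and G: "continuous_on UNIV G" and supp: "\<And>x. L < \<bar>x\<bar> \<Longrightarrow> G x = 0"
    and B: "\<And>x. x \<in> {-L..L} \<Longrightarrow> \<bar>G x\<bar> \<le> B"
  shows "integrable lborel (\<lambda>x. u x * G x)"
    and "\<bar>\<integral>x. u x * G x \<partial>lborel\<bar> \<le> B * (\<integral>x. \<bar>indicator {-L..L} x * u x\<bar> \<partial>lborel)"
proof -
  define U where "U x = indicator {-L..L} x * u x" for x
  have U: "integrable lborel U"
    using u unfolding loc_int_def U_def set_integrable_def by simp
  have eq: "u x * G x = U x * G x" for x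
  proof (cases "x \<in> {-L..L}")
    case False
    then have "L < \<bar>x\<bar>"
      by auto
    then show ?thesis
      using supp by simp
  qed (simp add: U_def)
  have bound: "\<bar>U x * G x\<bar> \<le> B * \<bar>U x\<bar>" for x
  proof (cases "x \<in> {-L..L}")
    case True
    then show ?thesis
      using mult_left_mono[OF B[OF True] abs_ge_zero[of "U x"]] by (simp add: abs_mult mult.commute)
  qed (simp add: U_def)
  have int: "integrable lborel (\<lambda>x. U x * G x)"
  proof (rule Bochner_Integration.integrable_bound[where f="\<lambda>x. B * \<bar>U x\<bar>"])
    show "integrable lborel (\<lambda>x. B * \<bar>U x\<bar>)"
      using U by simp
    show "(\<lambda>x. U x * G x) \<in> borel_measurable lborel"
      using U G by (intro borel_measurable_times) (auto intro: borel_measurable_continuous_onI)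
    show "AE x in lborel. norm (U x * G x) \<le> norm (B * \<bar>U x\<bar>)"
      using bound by (intro AE_I2) (metis abs_ge_self order.trans real_norm_def)
  qed
  then show "integrable lborel (\<lambda>x. u x * G x)"
    unfolding eq .
  have "\<bar>\<integral>x. U x * G x \<partial>lborel\<bar> \<le> (\<integral>x. \<bar>U x * G x\<bar> \<partial>lborel)"
    by (rule integral_abs_bound)
  also have "\<dots> \<le> (\<integral>x. B * \<bar>U x\<bar> \<partial>lborel)"
    using int U bound by (intro integral_mono) auto
  finally show "\<bar>\<integral>x. u x * G x \<partial>lborel\<bar> \<le> B * (\<integral>x. \<bar>indicator {-L..L} x * u x\<bar> \<partial>lborel)"
    unfolding eq U_def by simp
qed

lemma integrable_loc_int_mult:
  fixes u G :: "real \<Rightarrow> real"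
  assumes "loc_int u" "continuous_on UNIV G" "\<And>x. L < \<bar>x\<bar> \<Longrightarrow> G x = 0"
  shows "integrable lborel (\<lambda>x. u x * G x)"
proof -
  obtain B where "\<And>x. x \<in> {-L..L} \<Longrightarrow> norm (G x) \<le> B"
    using continuous_on_compact_bound[OF compact_Icc continuous_on_subset[OF assms(2) subset_UNIV]]
    by metis
  then show ?thesis
    by (intro loc_int_mult_bounded(1)[OF assms, where B=B]) auto
qed

lemma smooth_C1_approximation:
  fixes h h' :: "real \<Rightarrow> real"
  assumes h: "\<And>x. (h has_real_derivative h' x) (at x)" and h': "continuous_on UNIV h'" and e: "e > 0"
  obtains Q P where "smooth Q" "\<And>x. (Q has_real_derivative P x) (at x)" "continuous_on UNIV P"
    "\<And>x. x \<in> {-L..L} \<Longrightarrow> \<bar>h' x - P x\<bar> \<le> e"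
    "\<And>x. x \<in> {-L..L} \<Longrightarrow> \<bar>h x - Q x\<bar> \<le> 2 * L * e"
proof -
  obtain P where "polynomial_function P" and P: "\<forall>x\<in>{-L..L}. \<bar>h' x - P x\<bar> < e"
    using Stone_Weierstrass_polynomial_function[of "{-L..L}" h' e] h' e
    by (auto intro: continuous_on_subset)
  then obtain a n where P_eq: "P = (\<lambda>x. \<Sum>i\<le>n. a i * x ^ i)"
    using real_polynomial_function_iff_sum real_polynomial_function_eq by metis
  define Q where "Q x = h (-L) + (\<Sum>i\<le>n. a i * (x ^ Suc i - (-L) ^ Suc i) / real (Suc i))" for x
  have Q: "(Q has_real_derivative P x) (at x)" for x
  proof -
    have "((\<lambda>x. \<Sum>i\<le>n. a i * (x ^ Suc i - (-L) ^ Suc i) / real (Suc i)) has_real_derivative P x) (at x)"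
      unfolding P_eq
    proof (rule DERIV_sum)
      fix i
      have "((\<lambda>x. x ^ Suc i - (-L) ^ Suc i) has_real_derivative real (Suc i) * x ^ i) (at x)"
        using DERIV_diff[OF DERIV_pow[of "Suc i" x] DERIV_const[of "(-L) ^ Suc i"]]
        by (simp only: diff_Suc_Suc diff_zero minus_nat.diff_0)
      from DERIV_cdivide[OF DERIV_cmult[OF this, of "a i"], of "real (Suc i)"]
      show "((\<lambda>x. a i * (x ^ Suc i - (-L) ^ Suc i) / real (Suc i)) has_real_derivative a i * x ^ i) (at x)"
        by (simp del: of_nat_Suc)
    qed
    from DERIV_add[OF DERIV_const this] show ?thesis
      unfolding Q_def by simp
  qed
  have smooth: "smooth Q"
    unfolding smooth_def
  proof
    fix k
    have "Ck k P"
      unfolding P_eq by (rule Ck_poly)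
    then have "Ck (Suc k) Q"
      unfolding Ck_Suc using Q by blast
    then show "Ck k Q"
      by (rule Ck_mono) simp
  qed
  have approx: "\<bar>h x - Q x\<bar> \<le> 2 * L * e" if x: "x \<in> {-L..L}" for x
  proof -
    have "norm ((h x - Q x) - (h (-L) - Q (-L))) \<le> e * norm (x - (-L))"
      using x P DERIV_diff[OF h Q]
      by (intro field_differentiable_bound[of "{-L..L}" _ "\<lambda>z. h' z - P z"])
         (auto intro: has_field_derivative_at_within less_imp_le)
    then have "\<bar>h x - Q x\<bar> \<le> e * \<bar>x + L\<bar>"
      by (simp add: Q_def)
    also have "\<dots> \<le> e * (2 * L)"
      using x e by (intro mult_left_mono) auto
    finally show ?thesis
      by (simp add: mult_ac)
  qed
  have "continuous_on UNIV P"
    unfolding P_eq by (intro continuous_intros)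
  with smooth Q approx P show ?thesis
    by (intro that[of Q P]) (auto intro: less_imp_le)
qed

lemma eq_0_if_abs_le_epsilon_mult:
  fixes D K :: real
  assumes "\<And>e. e > 0 \<Longrightarrow> \<bar>D\<bar> \<le> e * K"
  shows "D = 0"
proof -
  have "K \<ge> 0"
    using assms[of 1] by simp
  have "\<bar>D\<bar> \<le> 0 + e" if "e > 0" for e
  proof -
    have "\<bar>D\<bar> \<le> e / (K + 1) * K"
      using assms[of "e / (K + 1)"] \<open>K \<ge> 0\<close> that by simp
    also have "\<dots> \<le> e"
      using \<open>K \<ge> 0\<close> that by (simp add: field_simps)
    finally show ?thesis
      by simp
  qed
  then show ?thesis
    using field_le_epsilon[of "\<bar>D\<bar>" 0] by simp
qed

text \<open>For a test function \<open>\<eta> k\<close> with \<open>k' = deriv k\<close>, this is the defect \<open>\<integral> u (\<eta> k)' + \<integral> v \<eta> k\<close> of the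
  integration by parts formula; it vanishes for smooth \<open>k\<close> and is continuous in \<open>(k, k')\<close> for the sup norm.\<close>
definition by_parts_defect ::
  "(real \<Rightarrow> real) \<Rightarrow> (real \<Rightarrow> real) \<Rightarrow> (real \<Rightarrow> real) \<Rightarrow> (real \<Rightarrow> real) \<Rightarrow> (real \<Rightarrow> real) \<Rightarrow> real" where
  "by_parts_defect u v \<eta> k k' =
    (\<integral>x. u x * (deriv \<eta> x * k x + \<eta> x * k' x) \<partial>lborel) + (\<integral>x. v x * (\<eta> x * k x) \<partial>lborel)"

lemma by_parts_integrable:
  fixes u v \<eta> k k' :: "real \<Rightarrow> real"
  assumes "loc_int u" "loc_int v" "smooth \<eta>" "\<And>x. L < \<bar>x\<bar> \<Longrightarrow> \<eta> x = 0"
    and "continuous_on UNIV k" "continuous_on UNIV k'"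
  shows "integrable lborel (\<lambda>x. u x * (deriv \<eta> x * k x + \<eta> x * k' x))"
    and "integrable lborel (\<lambda>x. v x * (\<eta> x * k x))"
  using assms deriv_eq_0_outside_support[OF assms(3,4)] smooth_continuous_on[OF assms(3)]
    smooth_continuous_on[OF smooth_deriv[OF assms(3)]]
  by (auto intro!: integrable_loc_int_mult[OF assms(1), where L=L] integrable_loc_int_mult[OF assms(2), where L=L]
      continuous_intros)

lemma by_parts_defect_diff:
  assumes "loc_int u" "loc_int v" "smooth \<eta>" "\<And>x. L < \<bar>x\<bar> \<Longrightarrow> \<eta> x = 0"
    and "continuous_on UNIV k1" "continuous_on UNIV k1'" "continuous_on UNIV k2" "continuous_on UNIV k2'"
  shows "by_parts_defect u v \<eta> k1 k1' - by_parts_defect u v \<eta> k2 k2'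
    = by_parts_defect u v \<eta> (\<lambda>x. k1 x - k2 x) (\<lambda>x. k1' x - k2' x)"
  using Bochner_Integration.integral_diff[OF by_parts_integrable(1)[OF assms(1-6)] by_parts_integrable(1)[OF assms(1-4,7,8)]]
    Bochner_Integration.integral_diff[OF by_parts_integrable(2)[OF assms(1-6)] by_parts_integrable(2)[OF assms(1-4,7,8)]]
  unfolding by_parts_defect_def by (simp add: algebra_simps)

lemma by_parts_defect_bound:
  assumes u: "loc_int u" and v: "loc_int v" and \<eta>: "smooth \<eta>" "\<And>x. L < \<bar>x\<bar> \<Longrightarrow> \<eta> x = 0"
  obtains K where "\<And>k k' a. continuous_on UNIV k \<Longrightarrow> continuous_on UNIV k' \<Longrightarrow>
    (\<And>x. x \<in> {-L..L} \<Longrightarrow> \<bar>k x\<bar> \<le> a \<and> \<bar>k' x\<bar> \<le> a) \<Longrightarrow> \<bar>by_parts_defect u v \<eta> k k'\<bar> \<le> a * K"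
proof -
  have supp': "deriv \<eta> x = 0" if "L < \<bar>x\<bar>" for x
    using deriv_eq_0_outside_support[OF \<eta> that] .
  have cont: "continuous_on UNIV \<eta>" "continuous_on UNIV (deriv \<eta>)"
    using \<eta>(1) by (auto intro: smooth_continuous_on smooth_deriv)
  obtain Be where Be: "Be \<ge> 0" "\<And>x. \<bar>\<eta> x\<bar> \<le> Be"
    using smooth_bounded[OF \<eta>] by blast
  obtain Bd where Bd: "Bd \<ge> 0" "\<And>x. \<bar>deriv \<eta> x\<bar> \<le> Bd"
    using smooth_bounded[OF smooth_deriv[OF \<eta>(1)] supp'] by blast
  define Iu where "Iu = (\<integral>x. \<bar>indicator {-L..L} x * u x\<bar> \<partial>lborel)"
  define Iv where "Iv = (\<integral>x. \<bar>indicator {-L..L} x * v x\<bar> \<partial>lborel)"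
  show ?thesis
  proof (rule that[of "(Bd + Be) * Iu + Be * Iv"])
    fix k k' :: "real \<Rightarrow> real" and a :: real
    assume k: "continuous_on UNIV k" "continuous_on UNIV k'"
      and a: "\<And>x. x \<in> {-L..L} \<Longrightarrow> \<bar>k x\<bar> \<le> a \<and> \<bar>k' x\<bar> \<le> a"
    have "\<bar>deriv \<eta> x * k x + \<eta> x * k' x\<bar> \<le> a * (Bd + Be)" if "x \<in> {-L..L}" for x
      using a[OF that] Bd Be unfolding distrib_left
      by (intro order.trans[OF abs_triangle_ineq] add_mono) (auto simp: abs_mult mult.commute[of a] intro: mult_mono)
    then have "\<bar>\<integral>x. u x * (deriv \<eta> x * k x + \<eta> x * k' x) \<partial>lborel\<bar> \<le> a * (Bd + Be) * Iu"
      unfolding Iu_def using k cont \<eta>(2) supp'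
      by (intro loc_int_mult_bounded(2)[OF u]) (auto intro!: continuous_intros)
    moreover have "\<bar>\<eta> x * k x\<bar> \<le> a * Be" if "x \<in> {-L..L}" for x
      using a[OF that] Be by (simp add: abs_mult mult.commute[of a] mult_mono)
    then have "\<bar>\<integral>x. v x * (\<eta> x * k x) \<partial>lborel\<bar> \<le> a * Be * Iv"
      unfolding Iv_def using k cont \<eta>(2)
      by (intro loc_int_mult_bounded(2)[OF v]) (auto intro!: continuous_intros)
    ultimately show "\<bar>by_parts_defect u v \<eta> k k'\<bar> \<le> a * ((Bd + Be) * Iu + Be * Iv)"
      unfolding by_parts_defect_def by (simp add: algebra_simps)
  qed
qed

lemma by_parts_defect_smooth:
  assumes wd: "weak_deriv u v" and \<eta>: "smooth \<eta>" "\<And>x. L < \<bar>x\<bar> \<Longrightarrow> \<eta> x = 0"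
    and Q: "smooth Q" "\<And>x. (Q has_real_derivative P x) (at x)"
  shows "by_parts_defect u v \<eta> Q P = 0"
proof -
  have "test_fun (\<lambda>x. \<eta> x * Q x)"
    using \<eta>(2) by (intro smooth_imp_test_fun smooth_mult \<eta>(1) Q(1)) auto
  then have "(\<integral>x. u x * deriv (\<lambda>x. \<eta> x * Q x) x \<partial>lborel) = - (\<integral>x. v x * (\<eta> x * Q x) \<partial>lborel)"
    using wd unfolding weak_deriv_def by blast
  moreover have "deriv (\<lambda>x. \<eta> x * Q x) = (\<lambda>x. deriv \<eta> x * Q x + \<eta> x * P x)"
    using DERIV_mult[OF smooth_has_real_derivative[OF \<eta>(1)] Q(2)]
    by (intro ext DERIV_imp_deriv) (simp add: mult.commute)
  ultimately show ?thesis
    unfolding by_parts_defect_def by simp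
qed

text \<open>Approximate \<open>h\<close> in \<open>C\<^sup>1\<close> on the support of \<open>\<eta>\<close> by a smooth \<open>Q\<close>, for which \<open>\<eta> Q\<close> is an admissible
  test function.\<close>
lemma weak_deriv_integral_by_parts:
  fixes u v \<eta> h h' :: "real \<Rightarrow> real"
  assumes wd: "weak_deriv u v" and \<eta>: "smooth \<eta>" "\<And>x. L < \<bar>x\<bar> \<Longrightarrow> \<eta> x = 0"
    and h: "\<And>x. (h has_real_derivative h' x) (at x)" and h': "continuous_on UNIV h'"
  shows "integrable lborel (\<lambda>x. u x * (deriv \<eta> x * h x + \<eta> x * h' x))"
    and "integrable lborel (\<lambda>x. v x * (\<eta> x * h x))"
    and "(\<integral>x. u x * (deriv \<eta> x * h x + \<eta> x * h' x) \<partial>lborel) = - (\<integral>x. v x * (\<eta> x * h x) \<partial>lborel)"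
proof -
  have u: "loc_int u" and v: "loc_int v"
    using wd unfolding weak_deriv_def by auto
  have h_cont: "continuous_on UNIV h"
    using h by (meson DERIV_isCont continuous_at_imp_continuous_on)
  show "integrable lborel (\<lambda>x. u x * (deriv \<eta> x * h x + \<eta> x * h' x))"
    "integrable lborel (\<lambda>x. v x * (\<eta> x * h x))"
    using by_parts_integrable[where L=L, OF u v \<eta> h_cont h'] by simp_all
  obtain K where K: "\<And>k k' a. continuous_on UNIV k \<Longrightarrow> continuous_on UNIV k' \<Longrightarrow>
      (\<And>x. x \<in> {-L..L} \<Longrightarrow> \<bar>k x\<bar> \<le> a \<and> \<bar>k' x\<bar> \<le> a) \<Longrightarrow> \<bar>by_parts_defect u v \<eta> k k'\<bar> \<le> a * K"
    using by_parts_defect_bound[OF u v \<eta>] by metis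
  have "by_parts_defect u v \<eta> h h' = 0"
  proof (rule eq_0_if_abs_le_epsilon_mult)
    fix e :: real
    assume "e > 0"
    obtain Q P where QP: "smooth Q" "\<And>x. (Q has_real_derivative P x) (at x)" "continuous_on UNIV P"
      "\<And>x. x \<in> {-L..L} \<Longrightarrow> \<bar>h' x - P x\<bar> \<le> e" "\<And>x. x \<in> {-L..L} \<Longrightarrow> \<bar>h x - Q x\<bar> \<le> 2 * L * e"
      by (rule smooth_C1_approximation[OF h h' \<open>e > 0\<close>, where L=L]) blast
    have Q_cont: "continuous_on UNIV Q"
      using QP(1) by (rule smooth_continuous_on)
    have "by_parts_defect u v \<eta> h h' = by_parts_defect u v \<eta> (\<lambda>x. h x - Q x) (\<lambda>x. h' x - P x)"
      using by_parts_defect_diff[OF u v \<eta> h_cont h' Q_cont QP(3)] by_parts_defect_smooth[OF wd \<eta> QP(1,2)]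
      by simp
    also have "\<bar>\<dots>\<bar> \<le> ((2 * \<bar>L\<bar> + 1) * e) * K"
    proof (rule K)
      show "\<bar>h x - Q x\<bar> \<le> (2 * \<bar>L\<bar> + 1) * e \<and> \<bar>h' x - P x\<bar> \<le> (2 * \<bar>L\<bar> + 1) * e" if "x \<in> {-L..L}" for x
        using QP(4,5)[OF that] \<open>e > 0\<close> that by (auto simp: algebra_simps)
    qed (use h_cont h' Q_cont QP(3) in \<open>auto intro!: continuous_intros\<close>)
    finally show "\<bar>by_parts_defect u v \<eta> h h'\<bar> \<le> e * ((2 * \<bar>L\<bar> + 1) * K)"
      by (simp add: mult_ac)
  qed
  then show "(\<integral>x. u x * (deriv \<eta> x * h x + \<eta> x * h' x) \<partial>lborel) = - (\<integral>x. v x * (\<eta> x * h x) \<partial>lborel)"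
    unfolding by_parts_defect_def by linarith
qed

section \<open>A lower Gronwall bound\<close>

text \<open>With \<open>z(\<tau>) = \<integral>\<^sub>0\<^sup>\<tau> w\<close>, the hypothesis makes \<open>W = w + c z\<close> nondecreasing. As \<open>c z(t)\<close> is an
  average of \<open>W\<close> over \<open>[0, t]\<close> with total weight \<open>1 - exp (- c t)\<close>, we get
  \<open>w(t) = W(t) - c z(t) \<ge> exp (- c t) W(t) \<ge> exp (- c t) w(0)\<close>.\<close>
lemma gronwall_lower_bound:
  fixes w :: "real \<Rightarrow> real"
  assumes c: "c \<ge> 0" and w: "continuous_on {0..T} w"
    and ineq: "\<And>t1 t2. 0 \<le> t1 \<Longrightarrow> t1 \<le> t2 \<Longrightarrow> t2 \<le> T \<Longrightarrow> w t2 - w t1 \<ge> - c * integral {t1..t2} w"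
    and t: "t \<in> {0..T}"
  shows "w t \<ge> w 0 * exp (- c * t)"
proof -
  have w_t: "continuous_on {0..t} w"
    using w t by (auto intro: continuous_on_subset)
  define z where "z \<tau> = integral {0..\<tau>} w" for \<tau>
  define W where "W \<tau> = w \<tau> + c * z \<tau>" for \<tau>
  define E where "E = exp (c * t)"
  have E: "E > 0"
    by (simp add: E_def)
  have W_mono: "W \<tau> \<le> W t" if \<tau>: "\<tau> \<in> {0..t}" for \<tau>
  proof -
    have "integral {\<tau>..t} w = z t - z \<tau>"
      using Henstock_Kurzweil_Integration.integral_combine[where a=0 and c=\<tau> and b=t and f=w] \<tau> integrable_continuous_interval[OF w_t]
      unfolding z_def by auto
    then show ?thesis
      using ineq[of \<tau> t] \<tau> t unfolding W_def by (auto simp: right_diff_distrib)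
  qed
  have "((\<lambda>\<tau>. exp (c * \<tau>) * W \<tau>) has_integral exp (c * t) * z t - exp (c * 0) * z 0) {0..t}"
  proof (rule fundamental_theorem_of_calculus)
    fix x
    assume x: "x \<in> {0..t}"
    have "(z has_real_derivative w x) (at x within {0..t})"
      unfolding z_def by (rule integral_has_real_derivative[OF w_t x])
    then have "((\<lambda>\<tau>. exp (c * \<tau>) * z \<tau>) has_real_derivative exp (c * x) * W x) (at x within {0..t})"
      unfolding W_def by (auto intro!: derivative_eq_intros simp: algebra_simps)
    then show "((\<lambda>\<tau>. exp (c * \<tau>) * z \<tau>) has_vector_derivative exp (c * x) * W x) (at x within {0..t})"
      by (simp add: has_real_derivative_iff_has_vector_derivative)
  qed (use t in simp)
  moreover have "((\<lambda>\<tau>. c * exp (c * \<tau>)) has_integral exp (c * t) - exp (c * 0)) {0..t}"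
    by (rule fundamental_theorem_of_calculus)
       (use t in \<open>auto intro!: derivative_eq_intros simp: has_real_derivative_iff_has_vector_derivative[symmetric]\<close>)
  ultimately have "((\<lambda>\<tau>. W t * (c * exp (c * \<tau>)) - c * (exp (c * \<tau>) * W \<tau>))
      has_integral W t * (E - 1) - c * (E * z t)) {0..t}"
    unfolding E_def z_def by (intro has_integral_diff has_integral_mult_right) auto
  then have "0 \<le> W t * (E - 1) - c * (E * z t)"
  proof (rule has_integral_nonneg)
    fix \<tau>
    assume "\<tau> \<in> {0..t}"
    then have "0 \<le> c * exp (c * \<tau>) * (W t - W \<tau>)"
      using W_mono c by simp
    then show "0 \<le> W t * (c * exp (c * \<tau>)) - c * (exp (c * \<tau>) * W \<tau>)"
      by (simp add: algebra_simps)
  qed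
  then have "w t \<ge> W t / E"
    using E unfolding W_def by (simp add: field_simps)
  moreover have "W 0 \<le> W t"
    using W_mono t by simp
  ultimately show ?thesis
    using E by (simp add: W_def z_def E_def exp_minus field_simps)
qed

section \<open>Slices and Fubini on the strip\<close>

lemma AE_lborel_pair_slices:
  fixes P :: "real \<times> real \<Rightarrow> bool"
  assumes "AE z in lborel. P z"
  shows "AE s in lborel. AE x in lborel. P (x, s)"
proof -
  from assms have "AE z in lborel \<Otimes>\<^sub>M lborel. P z"
    by (subst lborel_prod)
  then obtain N where N: "N \<in> null_sets (lborel \<Otimes>\<^sub>M lborel)" "{z \<in> space (lborel \<Otimes>\<^sub>M lborel). \<not> P z} \<subseteq> N"
    unfolding eventually_ae_filter by blast
  have "AE x in lborel. AE s in lborel. (x, s) \<notin> N"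
    using AE_not_in[OF N(1)] by (rule lborel_pair.AE_pair)
  moreover have "{z \<in> space (lborel \<Otimes>\<^sub>M lborel). (fst z, snd z) \<notin> N} \<in> sets (lborel \<Otimes>\<^sub>M lborel)"
  proof -
    have "{z \<in> space (lborel \<Otimes>\<^sub>M lborel). (fst z, snd z) \<notin> N} = space (lborel \<Otimes>\<^sub>M lborel) - N"
      by auto
    then show ?thesis
      using N(1) by (metis null_setsD2 sets.compl_sets)
  qed
  ultimately have "AE s in lborel. AE x in lborel. (x, s) \<notin> N"
    using lborel_pair.AE_commute[of "\<lambda>x s. (x, s) \<notin> N"] by simp
  then show ?thesis
    using N(2) by (auto elim!: eventually_mono simp: space_pair_measure)
qed

lemma measurable_slice:
  fixes g :: "real \<Rightarrow> real \<Rightarrow> real"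
  assumes "(\<lambda>(x, t). g x t) \<in> borel_measurable lborel"
  shows "(\<lambda>x. g x s) \<in> borel_measurable lborel"
proof -
  have "(\<lambda>(x, t). g x t) \<in> borel_measurable (lborel \<Otimes>\<^sub>M lborel)"
    using assms by (simp add: lborel_prod)
  then have "(\<lambda>x. (\<lambda>(x, t). g x t) (x, s)) \<in> borel_measurable lborel"
    by (rule measurable_compose[rotated]) (rule measurable_Pair, auto)
  then show ?thesis
    by simp
qed

lemma integrable_bounded_continuous_mult:
  fixes a G :: "real \<Rightarrow> real"
  assumes G: "integrable lborel G" and a: "continuous_on UNIV a" and A: "\<And>x. \<bar>a x\<bar> \<le> A"
  shows "integrable lborel (\<lambda>x. a x * G x)"
proof (rule Bochner_Integration.integrable_bound[where f="\<lambda>x. A * \<bar>G x\<bar>"])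
  show "integrable lborel (\<lambda>x. A * \<bar>G x\<bar>)"
    using G by auto
  show "(\<lambda>x. a x * G x) \<in> borel_measurable lborel"
    using G a by (intro borel_measurable_times) (auto simp: borel_measurable_continuous_onI)
  show "AE x in lborel. norm (a x * G x) \<le> norm (A * \<bar>G x\<bar>)"
  proof (rule AE_I2)
    fix x
    have "\<bar>a x\<bar> \<le> \<bar>A\<bar>"
      using A[of x] by linarith
    then show "norm (a x * G x) \<le> norm (A * \<bar>G x\<bar>)"
      by (simp add: abs_mult mult_right_mono)
  qed
qed

lemma abs_le_1_plus_square: "\<bar>y\<bar> \<le> 1 + y\<^sup>2" for y :: real
proof -
  have "0 \<le> (\<bar>y\<bar> - 1)\<^sup>2"
    by simp
  then show ?thesis
    unfolding power2_diff power2_abs power_one mult_1_right using zero_le_power2[of y] by linarith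
qed

lemma null_sets_strip_boundary: "(UNIV \<times> {a, b} :: (real \<times> real) set) \<in> null_sets (lborel \<Otimes>\<^sub>M lborel)"
proof -
  have "emeasure (lborel \<Otimes>\<^sub>M lborel) (UNIV \<times> {a, b} :: (real \<times> real) set)
      = emeasure lborel (UNIV :: real set) * emeasure lborel {a, b}"
    by (rule lborel.emeasure_pair_measure_Times) auto
  then show ?thesis
    by (simp add: null_sets_def emeasure_lborel_countable)
qed

lemma integrable_strip_dominant:
  fixes gt :: "real \<Rightarrow> real \<Rightarrow> real"
  assumes L2: "set_integrable lborel (UNIV \<times> {0<..<T}) (\<lambda>(x, t). (gt x t)\<^sup>2)" and T: "0 \<le> T"
  shows "integrable (lborel \<Otimes>\<^sub>M lborel) (\<lambda>z. indicator ({-R..R} \<times> {0<..<T}) z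
    + indicator (UNIV \<times> {0<..<T}) z * (case z of (x, t) \<Rightarrow> (gt x t)\<^sup>2))"
proof -
  have "emeasure (lborel \<Otimes>\<^sub>M lborel) ({-R..R} \<times> {0<..<T})
      = emeasure lborel {-R..R} * emeasure lborel {0<..<T::real}"
    by (rule lborel.emeasure_pair_measure_Times) auto
  also have "\<dots> < \<infinity>"
    using T by (simp add: ennreal_mult_less_top emeasure_lborel_Icc_eq)
  finally have "integrable (lborel \<Otimes>\<^sub>M lborel) (indicator ({-R..R} \<times> {0<..<T}) :: real \<times> real \<Rightarrow> real)"
    by (intro integrable_real_indicator) auto
  moreover have "integrable (lborel \<Otimes>\<^sub>M lborel)
      (\<lambda>z. indicator (UNIV \<times> {0<..<T}) z * (case z of (x, t) \<Rightarrow> (gt x t)\<^sup>2))"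
    using L2 unfolding set_integrable_def by (subst lborel_prod) simp
  ultimately show ?thesis
    by (rule Bochner_Integration.integrable_add)
qed

lemma integrable_strip_product:
  fixes gt :: "real \<Rightarrow> real \<Rightarrow> real" and a :: "real \<Rightarrow> real"
  assumes meas: "(\<lambda>(x, t). gt x t) \<in> borel_measurable lborel"
    and L2: "set_integrable lborel (UNIV \<times> {0<..<T}) (\<lambda>(x, t). (gt x t)\<^sup>2)"
    and a: "continuous_on UNIV a" "\<And>x. \<bar>a x\<bar> \<le> A" "\<And>x. R < \<bar>x\<bar> \<Longrightarrow> a x = 0"
    and t: "0 \<le> t" "t \<le> T"
  shows "integrable (lborel \<Otimes>\<^sub>M lborel) (\<lambda>(x, s). indicator {0..t} s * (a x * gt x s))"
proof -
  define H where "H x s = indicator {0..t} s * (a x * gt x s)" for x s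
  have A: "A \<ge> 0"
    using a(2)[of 0] by simp
  have H_meas: "(\<lambda>(x, s). H x s) \<in> borel_measurable (lborel \<Otimes>\<^sub>M lborel)"
  proof -
    have "(\<lambda>(x, t). gt x t) \<in> borel_measurable (lborel \<Otimes>\<^sub>M lborel)"
      using meas by (subst lborel_prod)
    moreover have "a \<in> borel_measurable lborel"
      using a(1) by (simp add: borel_measurable_continuous_onI)
    ultimately have "(\<lambda>z. indicator {0..t} (snd z) * (a (fst z) * (\<lambda>(x, t). gt x t) z))
        \<in> borel_measurable (lborel \<Otimes>\<^sub>M lborel)"
      by measurable
    then show ?thesis
      unfolding H_def by (simp add: case_prod_beta')
  qed
  define B where "B z = A * (indicator ({-R..R} \<times> {0<..<T}) z
    + indicator (UNIV \<times> {0<..<T}) z * (case z of (x, t) \<Rightarrow> (gt x t)\<^sup>2))" for z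
  have B_int: "integrable (lborel \<Otimes>\<^sub>M lborel) B"
    unfolding B_def using integrable_strip_dominant[OF L2, of R] t
    by (intro integrable_mult_right) simp
  note null = null_sets_strip_boundary[of 0 T]
  have "integrable (lborel \<Otimes>\<^sub>M lborel) (\<lambda>(x, s). H x s)"
  proof (rule Bochner_Integration.integrable_bound[OF B_int H_meas])
    show "AE z in lborel \<Otimes>\<^sub>M lborel. norm ((\<lambda>(x, s). H x s) z) \<le> norm (B z)"
      using AE_not_in[OF null]
    proof (rule eventually_mono)
      fix z :: "real \<times> real"
      assume z: "z \<notin> UNIV \<times> {0, T}"
      obtain x s where z_eq: "z = (x, s)"
        by (cases z)
      have "B (x, s) \<ge> 0"
        using A by (simp add: B_def)
      moreover have "\<bar>H x s\<bar> \<le> B (x, s)"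
      proof (cases "s \<in> {0..t} \<and> x \<in> {-R..R}")
        case True
        then have "s \<in> {0<..<T}"
          using z t z_eq by auto
        have "\<bar>H x s\<bar> = \<bar>a x\<bar> * \<bar>gt x s\<bar>"
          using True by (simp add: H_def abs_mult)
        also have "\<dots> \<le> A * (1 + (gt x s)\<^sup>2)"
          using a(2)[of x] abs_le_1_plus_square[of "gt x s"] A by (intro mult_mono) auto
        also have "\<dots> = B (x, s)"
          using True \<open>s \<in> {0<..<T}\<close> by (simp add: B_def)
        finally show ?thesis .
      next
        case False
        then have "H x s = 0"
          using a(3)[of x] by (auto simp: H_def)
        then show ?thesis
          using \<open>B (x, s) \<ge> 0\<close> by simp
      qed
      ultimately show "norm ((\<lambda>(x, s). H x s) z) \<le> norm (B z)"
        using z_eq by simp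
    qed
  qed
  then show ?thesis
    unfolding H_def .
qed

lemma Fubini_strip:
  fixes gt :: "real \<Rightarrow> real \<Rightarrow> real" and a :: "real \<Rightarrow> real"
  assumes meas: "(\<lambda>(x, t). gt x t) \<in> borel_measurable lborel"
    and L2: "set_integrable lborel (UNIV \<times> {0<..<T}) (\<lambda>(x, t). (gt x t)\<^sup>2)"
    and a: "continuous_on UNIV a" "\<And>x. \<bar>a x\<bar> \<le> A" "\<And>x. R < \<bar>x\<bar> \<Longrightarrow> a x = 0"
    and t: "0 \<le> t" "t \<le> T"
  shows "integrable lborel (\<lambda>x. a x * (LINT s:{0..t}|lborel. gt x s))"
    and "set_integrable lborel {0..t} (\<lambda>s. \<integral>x. a x * gt x s \<partial>lborel)"
    and "(\<integral>x. a x * (LINT s:{0..t}|lborel. gt x s) \<partial>lborel) = (LINT s:{0..t}|lborel. (\<integral>x. a x * gt x s \<partial>lborel))"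
proof -
  define H where "H x s = indicator {0..t} s * (a x * gt x s)" for x s
  have H_int: "integrable (lborel \<Otimes>\<^sub>M lborel) (\<lambda>(x, s). H x s)"
    unfolding H_def using integrable_strip_product[OF meas L2 a t] .
  have x_integral: "(\<integral>s. H x s \<partial>lborel) = a x * (LINT s:{0..t}|lborel. gt x s)" for x
    unfolding H_def set_lebesgue_integral_def by (simp add: mult_ac)
  have s_integral: "(\<integral>x. H x s \<partial>lborel) = indicator {0..t} s * (\<integral>x. a x * gt x s \<partial>lborel)" for s
    unfolding H_def by simp
  show "integrable lborel (\<lambda>x. a x * (LINT s:{0..t}|lborel. gt x s))"
    using lborel_pair.integrable_fst[OF H_int] unfolding x_integral .
  show "set_integrable lborel {0..t} (\<lambda>s. \<integral>x. a x * gt x s \<partial>lborel)"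
    using lborel_pair.integrable_snd[OF H_int] unfolding s_integral set_integrable_def by simp
  show "(\<integral>x. a x * (LINT s:{0..t}|lborel. gt x s) \<partial>lborel) = (LINT s:{0..t}|lborel. (\<integral>x. a x * gt x s \<partial>lborel))"
    using lborel_pair.Fubini_integral[OF H_int] unfolding x_integral s_integral set_lebesgue_integral_def by simp
qed

lemma weak_deriv2_integral_by_parts:
  fixes G Gx Gxx \<eta> w w1 w2 :: "real \<Rightarrow> real"
  assumes G: "weak_deriv G Gx" "weak_deriv Gx Gxx"
    and \<eta>: "smooth \<eta>" "\<And>x. L < \<bar>x\<bar> \<Longrightarrow> \<eta> x = 0"
    and w: "\<And>x. (w has_real_derivative w1 x) (at x)" "\<And>x. (w1 has_real_derivative w2 x) (at x)"
      "continuous_on UNIV w2"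
  shows "(\<integral>x. Gx x * (\<eta> x * w x) \<partial>lborel) = - (\<integral>x. G x * (deriv \<eta> x * w x + \<eta> x * w1 x) \<partial>lborel)"
    and "(\<integral>x. Gxx x * (\<eta> x * w x) \<partial>lborel)
      = (\<integral>x. G x * (deriv (deriv \<eta>) x * w x + 2 * (deriv \<eta> x * w1 x) + \<eta> x * w2 x) \<partial>lborel)"
proof -
  have w1_cont: "continuous_on UNIV w1"
    using w(2) by (meson DERIV_isCont continuous_at_imp_continuous_on)
  have supp': "deriv \<eta> x = 0" if "L < \<bar>x\<bar>" for x
    using deriv_eq_0_outside_support[OF \<eta> that] .
  note first = weak_deriv_integral_by_parts[OF G(1) \<eta> w(1) w1_cont]
  note second = weak_deriv_integral_by_parts[OF G(2) \<eta> w(1) w1_cont]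
  note first' = weak_deriv_integral_by_parts[OF G(1) smooth_deriv[OF \<eta>(1)] supp' w(1) w1_cont]
  note first'' = weak_deriv_integral_by_parts[OF G(1) \<eta> w(2,3)]
  show "(\<integral>x. Gx x * (\<eta> x * w x) \<partial>lborel) = - (\<integral>x. G x * (deriv \<eta> x * w x + \<eta> x * w1 x) \<partial>lborel)"
    using first(3) by simp
  have "(\<integral>x. Gxx x * (\<eta> x * w x) \<partial>lborel)
      = - (\<integral>x. Gx x * (deriv \<eta> x * w x) + Gx x * (\<eta> x * w1 x) \<partial>lborel)"
    using second(3) by (simp add: distrib_left)
  also have "\<dots> = (\<integral>x. G x * (deriv (deriv \<eta>) x * w x + deriv \<eta> x * w1 x) \<partial>lborel)
      + (\<integral>x. G x * (deriv \<eta> x * w1 x + \<eta> x * w2 x) \<partial>lborel)"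
    using first'(2,3) first''(2,3) by simp
  also have "\<dots> = (\<integral>x. G x * (deriv (deriv \<eta>) x * w x + 2 * (deriv \<eta> x * w1 x) + \<eta> x * w2 x) \<partial>lborel)"
    using first'(1) first''(1) by (simp add: algebra_simps flip: Bochner_Integration.integral_add)
  finally show "(\<integral>x. Gxx x * (\<eta> x * w x) \<partial>lborel)
      = (\<integral>x. G x * (deriv (deriv \<eta>) x * w x + 2 * (deriv \<eta> x * w1 x) + \<eta> x * w2 x) \<partial>lborel)" .
qed

section \<open>The spatial estimate\<close>

text \<open>The diffusion coefficient \<open>q\<close> (the paper's \<open>p\<^sub>\<epsilon>\<close>), with derivatives \<open>q1\<close>, \<open>q2\<close>.\<close>
locale transition_weight =
  fixes q q1 q2 :: "real \<Rightarrow> real" and cp :: real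
  assumes has_derivative_q: "\<And>x. (q has_real_derivative q1 x) (at x)"
    and has_derivative_q1: "\<And>x. (q1 has_real_derivative q2 x) (at x)"
    and continuous_q2: "continuous_on UNIV q2"
    and q_pos: "\<And>x. 0 < q x" and q_le_1: "\<And>x. q x \<le> 1"
    and q1_bound: "\<And>x. \<bar>q1 x\<bar> \<le> cp * (1 - q x)"
    and q2_bound: "\<And>x. \<bar>q2 x\<bar> \<le> cp * (1 - q x)"
    and cp_nonneg: "0 \<le> cp"
begin

lemma continuous_q: "continuous_on S q"
  using has_derivative_q by (meson DERIV_isCont continuous_at_imp_continuous_on)

lemma continuous_q1: "continuous_on S q1"
  using has_derivative_q1 by (meson DERIV_isCont continuous_at_imp_continuous_on)

lemma abs_mult_one_minus_q_le: "0 \<le> y \<Longrightarrow> y \<le> B \<Longrightarrow> \<bar>y * (1 - q x)\<bar> \<le> B"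
  using mult_left_le[of "1 - q x" y] q_pos[of x] q_le_1[of x] by (simp add: abs_mult)

definition weight :: "real \<Rightarrow> real" where
  "weight x = (1 - q x) * q x"

definition weight1 :: "real \<Rightarrow> real" where
  "weight1 x = q1 x * (1 - 2 * q x)"

definition weight2 :: "real \<Rightarrow> real" where
  "weight2 x = q2 x * (1 - 2 * q x) - 2 * (q1 x)\<^sup>2"

lemma has_derivative_weight:
  shows "(weight has_real_derivative weight1 x) (at x)"
    and "(weight1 has_real_derivative weight2 x) (at x)"
  unfolding weight_def weight1_def weight2_def using has_derivative_q[of x] has_derivative_q1[of x]
  by (auto intro!: derivative_eq_intros simp: algebra_simps power2_eq_square)

lemma continuous_weight:
  shows "continuous_on S weight" and "continuous_on S weight1" and "continuous_on S weight2"
  unfolding weight_def weight1_def weight2_def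
  by (auto intro!: continuous_intros continuous_q continuous_q1 continuous_on_subset[OF continuous_q2])

lemma weight_bounds:
  shows "\<bar>weight x\<bar> \<le> 1"
    and "\<bar>weight1 x\<bar> \<le> cp * (1 - q x)"
    and "\<bar>weight2 x\<bar> \<le> (cp + 2 * cp\<^sup>2) * (1 - q x)"
proof -
  have q: "0 \<le> 1 - q x" "1 - q x \<le> 1" "\<bar>1 - 2 * q x\<bar> \<le> 1"
    using q_pos[of x] q_le_1[of x] by auto
  then show "\<bar>weight x\<bar> \<le> 1"
    using q_pos[of x] unfolding weight_def by (simp add: abs_mult mult_le_one)
  show "\<bar>weight1 x\<bar> \<le> cp * (1 - q x)"
    using mult_mono[OF q1_bound q(3)] q cp_nonneg unfolding weight1_def by (simp add: abs_mult)
  have "\<bar>weight2 x\<bar> \<le> \<bar>q2 x\<bar> * \<bar>1 - 2 * q x\<bar> + 2 * (q1 x)\<^sup>2"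
    using abs_triangle_ineq4[of "q2 x * (1 - 2 * q x)" "2 * (q1 x)\<^sup>2"] unfolding weight2_def
    by (simp add: abs_mult)
  also have "\<dots> \<le> cp * (1 - q x) + 2 * (cp * (1 - q x))\<^sup>2"
    using mult_mono[OF q2_bound q(3)] q cp_nonneg power_mono[OF q1_bound abs_ge_zero, of x 2]
    by (intro add_mono) auto
  also have "\<dots> \<le> (cp + 2 * cp\<^sup>2) * (1 - q x)"
  proof -
    have "(1 - q x)\<^sup>2 \<le> 1 - q x"
      using q by (simp add: power2_eq_square mult_le_one mult_left_le)
    then have "cp\<^sup>2 * (1 - q x)\<^sup>2 \<le> cp\<^sup>2 * (1 - q x)"
      by (intro mult_left_mono) auto
    moreover have "(cp * (1 - q x))\<^sup>2 = cp\<^sup>2 * (1 - q x)\<^sup>2"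
      by (simp add: power_mult_distrib)
    moreover have "(cp + 2 * cp\<^sup>2) * (1 - q x) = cp * (1 - q x) + 2 * (cp\<^sup>2 * (1 - q x))"
      by (simp add: algebra_simps)
    ultimately show ?thesis
      by linarith
  qed
  finally show "\<bar>weight2 x\<bar> \<le> (cp + 2 * cp\<^sup>2) * (1 - q x)" .
qed

text \<open>Testing the equation against \<open>\<eta> (1 - q)\<close> and integrating by parts twice moves all
  derivatives onto \<open>\<eta> \<cdot> weight\<close>, where \<open>weight = q (1 - q)\<close> absorbs the factor \<open>q\<close> of the equation.\<close>
definition rate_integrand :: "(real \<Rightarrow> real) \<Rightarrow> real \<Rightarrow> real \<Rightarrow> real \<Rightarrow> real" where
  "rate_integrand \<eta> c d x = c * (deriv \<eta> x * weight x + \<eta> x * weight1 x)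
    + d * (deriv (deriv \<eta>) x * weight x + 2 * (deriv \<eta> x * weight1 x) + \<eta> x * weight2 x)"

lemma weighted_rate_eq:
  fixes G Gx Gxx Gt \<eta> :: "real \<Rightarrow> real"
  assumes G: "weak_deriv G Gx" "weak_deriv Gx Gxx"
    and pde: "AE x in lborel. Gt x + c * q x * Gx x - d * q x * Gxx x = 0"
    and Gt: "Gt \<in> borel_measurable lborel"
    and \<eta>: "smooth \<eta>" "\<And>x. R < \<bar>x\<bar> \<Longrightarrow> \<eta> x = 0"
  shows "integrable lborel (\<lambda>x. G x * rate_integrand \<eta> c d x)"
    and "(\<integral>x. \<eta> x * (1 - q x) * Gt x \<partial>lborel) = (\<integral>x. G x * rate_integrand \<eta> c d x \<partial>lborel)"
proof -
  define A where "A x = deriv \<eta> x * weight x + \<eta> x * weight1 x" for x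
  define B where "B x = deriv (deriv \<eta>) x * weight x + 2 * (deriv \<eta> x * weight1 x) + \<eta> x * weight2 x" for x
  have integrand: "G x * rate_integrand \<eta> c d x = c * (G x * A x) + d * (G x * B x)" for x
    unfolding rate_integrand_def A_def B_def by (simp add: algebra_simps)
  have \<eta>_cont: "continuous_on UNIV \<eta>" "continuous_on UNIV (deriv \<eta>)" "continuous_on UNIV (deriv (deriv \<eta>))"
    using \<eta>(1) by (auto intro: smooth_continuous_on smooth_deriv)
  have \<eta>_supp: "deriv \<eta> x = 0" "deriv (deriv \<eta>) x = 0" if "R < \<bar>x\<bar>" for x
    using deriv_eq_0_outside_support[OF \<eta>(1,2) that]
      deriv_eq_0_outside_support[OF smooth_deriv[OF \<eta>(1)] _ that] deriv_eq_0_outside_support[OF \<eta>(1,2)]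
    by auto
  have loc: "loc_int G" "loc_int Gx" "loc_int Gxx"
    using G unfolding weak_deriv_def by auto
  have int_Gx: "integrable lborel (\<lambda>x. Gx x * (\<eta> x * weight x))" "integrable lborel (\<lambda>x. Gxx x * (\<eta> x * weight x))"
    using \<eta>(2) continuous_weight \<eta>_cont
    by (auto intro!: integrable_loc_int_mult[OF loc(2), where L=R] integrable_loc_int_mult[OF loc(3), where L=R]
        continuous_intros)
  have int_G: "integrable lborel (\<lambda>x. G x * A x)" "integrable lborel (\<lambda>x. G x * B x)"
    unfolding A_def B_def using \<eta>(2) \<eta>_supp continuous_weight \<eta>_cont
    by (auto intro!: integrable_loc_int_mult[OF loc(1), where L=R] continuous_intros)
  then show "integrable lborel (\<lambda>x. G x * rate_integrand \<eta> c d x)"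
    unfolding integrand by auto
  have ae: "AE x in lborel. \<eta> x * (1 - q x) * Gt x = - c * (Gx x * (\<eta> x * weight x)) + d * (Gxx x * (\<eta> x * weight x))"
    using pde
  proof (rule eventually_mono)
    fix x
    assume "Gt x + c * q x * Gx x - d * q x * Gxx x = 0"
    then have Gt_eq: "Gt x = - c * q x * Gx x + d * q x * Gxx x"
      by simp
    show "\<eta> x * (1 - q x) * Gt x = - c * (Gx x * (\<eta> x * weight x)) + d * (Gxx x * (\<eta> x * weight x))"
      unfolding Gt_eq weight_def by (simp add: algebra_simps)
  qed
  have "(\<integral>x. \<eta> x * (1 - q x) * Gt x \<partial>lborel)
      = (\<integral>x. - c * (Gx x * (\<eta> x * weight x)) + d * (Gxx x * (\<eta> x * weight x)) \<partial>lborel)"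
  proof (rule integral_cong_AE[OF _ _ ae])
    have "(\<lambda>x. \<eta> x * (1 - q x)) \<in> borel_measurable lborel"
      using \<eta>_cont continuous_q by (auto intro!: borel_measurable_continuous_onI continuous_intros)
    then show "(\<lambda>x. \<eta> x * (1 - q x) * Gt x) \<in> borel_measurable lborel"
      using Gt by (rule borel_measurable_times)
  qed (use int_Gx in auto)
  also have "\<dots> = - c * (\<integral>x. Gx x * (\<eta> x * weight x) \<partial>lborel) + d * (\<integral>x. Gxx x * (\<eta> x * weight x) \<partial>lborel)"
    using int_Gx by simp
  also have "\<dots> = c * (\<integral>x. G x * A x \<partial>lborel) + d * (\<integral>x. G x * B x \<partial>lborel)"
    using weak_deriv2_integral_by_parts[OF G \<eta>(1,2) has_derivative_weight continuous_weight(3)]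
    unfolding A_def B_def by simp
  also have "\<dots> = (\<integral>x. G x * rate_integrand \<eta> c d x \<partial>lborel)"
    unfolding integrand using int_G by simp
  finally show "(\<integral>x. \<eta> x * (1 - q x) * Gt x \<partial>lborel) = (\<integral>x. G x * rate_integrand \<eta> c d x \<partial>lborel)" .
qed

lemma rate_integrand_lower_bound:
  assumes \<eta>: "\<eta> x \<ge> 0" "\<bar>deriv \<eta> x\<bar> \<le> B1" "\<bar>deriv (deriv \<eta>) x\<bar> \<le> B2"
    and d: "d \<ge> 0" and c0: "\<bar>c\<bar> * cp + d * (cp + 2 * cp\<^sup>2) \<le> c0"
  shows "rate_integrand \<eta> c d x \<ge> - c0 * (\<eta> x * (1 - q x)) - (\<bar>c\<bar> * B1 + d * B2 + 2 * d * B1 * cp)"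
proof -
  have q: "0 \<le> 1 - q x" "1 - q x \<le> 1"
    using q_pos[of x] q_le_1[of x] by auto
  note w = weight_bounds(1)[of x]
  have w1: "\<bar>weight1 x\<bar> \<le> cp * (1 - q x)" "\<bar>weight1 x\<bar> \<le> cp"
    using weight_bounds(2)[of x] q cp_nonneg mult_left_le[of "1 - q x" cp] by auto
  have "\<bar>c * (\<eta> x * weight1 x)\<bar> \<le> \<bar>c\<bar> * (\<eta> x * (cp * (1 - q x)))"
    unfolding abs_mult abs_of_nonneg[OF \<eta>(1)] using w1(1) \<eta>(1) by (intro mult_left_mono) auto
  moreover have "\<bar>d * (\<eta> x * weight2 x)\<bar> \<le> d * (\<eta> x * ((cp + 2 * cp\<^sup>2) * (1 - q x)))"
    unfolding abs_mult abs_of_nonneg[OF \<eta>(1)] abs_of_nonneg[OF d]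
    using weight_bounds(3)[of x] \<eta>(1) d by (intro mult_left_mono) auto
  moreover have "\<bar>c\<bar> * (\<eta> x * (cp * (1 - q x))) + d * (\<eta> x * ((cp + 2 * cp\<^sup>2) * (1 - q x)))
      \<le> c0 * (\<eta> x * (1 - q x))"
  proof -
    have "\<bar>c\<bar> * (\<eta> x * (cp * (1 - q x))) + d * (\<eta> x * ((cp + 2 * cp\<^sup>2) * (1 - q x)))
        = (\<bar>c\<bar> * cp + d * (cp + 2 * cp\<^sup>2)) * (\<eta> x * (1 - q x))"
      by (simp add: algebra_simps)
    also have "\<dots> \<le> c0 * (\<eta> x * (1 - q x))"
      using c0 \<eta>(1) q by (intro mult_right_mono) auto
    finally show ?thesis .
  qed
  moreover have "\<bar>c * (deriv \<eta> x * weight x)\<bar> \<le> \<bar>c\<bar> * (B1 * 1)"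
    unfolding abs_mult using mult_mono[OF \<eta>(2) w] \<eta>(2) by (intro mult_left_mono) auto
  moreover have "\<bar>d * (deriv (deriv \<eta>) x * weight x)\<bar> \<le> d * (B2 * 1)"
    unfolding abs_mult abs_of_nonneg[OF d] using mult_mono[OF \<eta>(3) w] \<eta>(3) d
    by (intro mult_left_mono) auto
  moreover have "\<bar>2 * d * (deriv \<eta> x * weight1 x)\<bar> \<le> 2 * d * (B1 * cp)"
    unfolding abs_mult abs_of_nonneg[OF d] abs_numeral using mult_mono[OF \<eta>(2) w1(2)] \<eta>(2) d
    by (intro mult_left_mono) auto
  moreover have "rate_integrand \<eta> c d x = c * (\<eta> x * weight1 x) + d * (\<eta> x * weight2 x)
      + (c * (deriv \<eta> x * weight x) + d * (deriv (deriv \<eta>) x * weight x) + 2 * d * (deriv \<eta> x * weight1 x))"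
    by (simp add: rate_integrand_def algebra_simps)
  ultimately show ?thesis
    using abs_ge_minus_self[of "c * (\<eta> x * weight1 x)"] abs_ge_minus_self[of "d * (\<eta> x * weight2 x)"]
      abs_ge_minus_self[of "c * (deriv \<eta> x * weight x)"] abs_ge_minus_self[of "d * (deriv (deriv \<eta>) x * weight x)"]
      abs_ge_minus_self[of "2 * d * (deriv \<eta> x * weight1 x)"]
    by (simp add: algebra_simps)
qed

lemma weighted_rate_lower_bound:
  fixes G Gx Gxx Gt \<eta> :: "real \<Rightarrow> real"
  assumes G: "weak_deriv G Gx" "weak_deriv Gx Gxx"
    and pde: "AE x in lborel. Gt x + c * q x * Gx x - d * q x * Gxx x = 0"
    and Gt: "Gt \<in> borel_measurable lborel"
    and G_nonneg: "AE x in lborel. G x \<ge> 0" and G_int: "integrable lborel G"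
    and \<eta>: "smooth \<eta>" "\<And>x. R < \<bar>x\<bar> \<Longrightarrow> \<eta> x = 0" "\<And>x. \<eta> x \<ge> 0"
    and B1: "\<And>x. \<bar>deriv \<eta> x\<bar> \<le> B1" and B2: "\<And>x. \<bar>deriv (deriv \<eta>) x\<bar> \<le> B2"
    and d: "d \<ge> 0" and c0: "\<bar>c\<bar> * cp + d * (cp + 2 * cp\<^sup>2) \<le> c0"
  shows "(\<integral>x. \<eta> x * (1 - q x) * Gt x \<partial>lborel) \<ge> - c0 * (\<integral>x. \<eta> x * (1 - q x) * G x \<partial>lborel)
      - (\<bar>c\<bar> * B1 + d * B2 + 2 * d * B1 * cp) * (\<integral>x. G x \<partial>lborel)"
proof -
  define Er where "Er = \<bar>c\<bar> * B1 + d * B2 + 2 * d * B1 * cp"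
  note rate = weighted_rate_eq[OF G pde Gt \<eta>(1,2)]
  obtain B0 where B0: "\<And>x. \<bar>\<eta> x\<bar> \<le> B0"
    using smooth_bounded[OF \<eta>(1,2)] by blast
  have "\<bar>\<eta> x * (1 - q x)\<bar> \<le> B0" for x
    using B0[of x] \<eta>(3)[of x] by (intro abs_mult_one_minus_q_le) auto
  then have int_\<eta>: "integrable lborel (\<lambda>x. \<eta> x * (1 - q x) * G x)"
    using smooth_continuous_on[OF \<eta>(1)] continuous_q
    by (intro integrable_bounded_continuous_mult[OF G_int]) (auto intro!: continuous_intros)
  have "(\<integral>x. G x * rate_integrand \<eta> c d x \<partial>lborel) \<ge> (\<integral>x. - c0 * (\<eta> x * (1 - q x) * G x) - Er * G x \<partial>lborel)"
  proof (rule integral_mono_AE)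
    show "AE x in lborel. - c0 * (\<eta> x * (1 - q x) * G x) - Er * G x \<le> G x * rate_integrand \<eta> c d x"
      using G_nonneg
    proof (rule eventually_mono)
      fix x
      assume "G x \<ge> 0"
      with rate_integrand_lower_bound[OF \<eta>(3) B1 B2 d c0]
      have "G x * (- c0 * (\<eta> x * (1 - q x)) - Er) \<le> G x * rate_integrand \<eta> c d x"
        unfolding Er_def by (rule mult_left_mono)
      then show "- c0 * (\<eta> x * (1 - q x) * G x) - Er * G x \<le> G x * rate_integrand \<eta> c d x"
        by (simp add: algebra_simps)
    qed
  qed (use int_\<eta> G_int rate(1) in auto)
  also have "(\<integral>x. - c0 * (\<eta> x * (1 - q x) * G x) - Er * G x \<partial>lborel)
      = - c0 * (\<integral>x. \<eta> x * (1 - q x) * G x \<partial>lborel) - Er * (\<integral>x. G x \<partial>lborel)"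
    using int_\<eta> G_int by simp
  finally show ?thesis
    using rate(2) unfolding Er_def by simp
qed

text \<open>The bound \<open>q1 \<le> cp (1 - q)\<close> makes \<open>e\<^sup>c\<^sup>p\<^sup>z (1 - q z)\<close> nondecreasing, so \<open>q\<close> cannot reach \<open>1\<close>
  without being \<open>1\<close> on the whole left half-line.\<close>
lemma q_eq_1_left:
  assumes "q x = 1" "y \<le> x"
  shows "q y = 1"
proof -
  define f where "f z = exp (cp * z) * (1 - q z)" for z
  have "f y \<le> f x"
  proof (rule DERIV_nonneg_imp_nondecreasing[OF assms(2)])
    fix z
    have "(f has_real_derivative exp (cp * z) * (cp * (1 - q z) - q1 z)) (at z)"
      unfolding f_def using has_derivative_q[of z] by (auto intro!: derivative_eq_intros simp: algebra_simps)
    moreover have "0 \<le> exp (cp * z) * (cp * (1 - q z) - q1 z)"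
      using q1_bound[of z] by simp
    ultimately show "\<exists>y. (f has_real_derivative y) (at z) \<and> 0 \<le> y"
      by blast
  qed
  then have "1 - q y \<le> 0"
    using assms(1) by (simp add: f_def mult_le_0_iff)
  then show ?thesis
    using q_le_1[of y] by simp
qed

lemma q_lt_1:
  assumes "mono q" "q y < 1"
  shows "q x < 1"
proof (rule ccontr)
  assume "\<not> q x < 1"
  then have "q x = 1"
    using q_le_1[of x] by simp
  moreover have "q x \<le> q y" if "x \<le> y"
    using assms(1) that by (rule monoD)
  ultimately show False
    using q_eq_1_left[of x y] assms(2) q_le_1[of y] by force
qed

end

section \<open>Mass bounds\<close>

lemma integrable_if_integrable_divide:
  fixes G q :: "real \<Rightarrow> real"
  assumes q: "q \<in> borel_measurable lborel" "\<And>x. 0 < q x" "\<And>x. q x \<le> 1"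
    and G: "AE x in lborel. G x \<ge> 0" "integrable lborel (\<lambda>x. G x / q x)"
  shows "integrable lborel G" and "(\<integral>x. G x \<partial>lborel) \<le> (\<integral>x. G x / q x \<partial>lborel)"
proof -
  have le: "G x \<le> G x / q x" if "G x \<ge> 0" for x
    using that q(2,3)[of x] by (simp add: le_divide_eq mult_left_le)
  have "(\<lambda>x. G x / q x * q x) \<in> borel_measurable lborel"
    using G(2) q(1) by (intro borel_measurable_times) auto
  then have "G \<in> borel_measurable lborel"
    using q(2) by (simp add: less_imp_neq[symmetric])
  moreover have "AE x in lborel. norm (G x) \<le> norm (G x / q x)"
    using G(1) by (rule eventually_mono) (use le q(2) in \<open>auto simp: abs_of_nonneg less_imp_le\<close>)
  ultimately show G_int: "integrable lborel G"
    using G(2) by (rule Bochner_Integration.integrable_bound[rotated])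
  show "(\<integral>x. G x \<partial>lborel) \<le> (\<integral>x. G x / q x \<partial>lborel)"
    using G_int G le by (intro integral_mono_AE) (auto elim!: eventually_mono)
qed

lemma integrable_weight_mult:
  fixes G q :: "real \<Rightarrow> real"
  assumes q: "q \<in> borel_measurable lborel" "\<And>x. 0 < q x" "\<And>x. q x \<le> 1" and G: "integrable lborel G"
  shows "integrable lborel (\<lambda>x. q x * G x)"
proof (rule Bochner_Integration.integrable_bound[OF G])
  show "(\<lambda>x. q x * G x) \<in> borel_measurable lborel"
    using G q(1) by (intro borel_measurable_times) auto
  show "AE x in lborel. norm (q x * G x) \<le> norm (G x)"
    using q(2,3) by (intro AE_I2) (simp add: abs_mult abs_of_pos mult_left_le_one_le less_imp_le)
qed

text \<open>Cauchy-Schwarz for \<open>G = \<surd>(q G) \<surd>(G / q)\<close>, expanded as the positivity of \<open>\<integral> (q - \<alpha>)\<^sup>2 G / q\<close>.\<close>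
lemma square_integral_le_integral_mult:
  fixes G q :: "real \<Rightarrow> real"
  assumes q: "q \<in> borel_measurable lborel" "\<And>x. 0 < q x" "\<And>x. q x \<le> 1"
    and G: "AE x in lborel. G x \<ge> 0" "integrable lborel (\<lambda>x. G x / q x)" "(\<integral>x. G x / q x \<partial>lborel) = 1"
  shows "(\<integral>x. G x \<partial>lborel)\<^sup>2 \<le> (\<integral>x. q x * G x \<partial>lborel)"
proof -
  define \<alpha> where "\<alpha> = (\<integral>x. G x \<partial>lborel)"
  have G_int: "integrable lborel G"
    using integrable_if_integrable_divide(1)[OF q G(1,2)] .
  have qG_int: "integrable lborel (\<lambda>x. q x * G x)"
    using integrable_weight_mult[OF q G_int] .
  have "0 \<le> (\<integral>x. G x / q x * (q x - \<alpha>)\<^sup>2 \<partial>lborel)"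
    using G(1) by (intro integral_nonneg_AE) (auto elim!: eventually_mono simp: less_imp_le[OF q(2)])
  also have "\<dots> = (\<integral>x. q x * G x - 2 * \<alpha> * G x + \<alpha>\<^sup>2 * (G x / q x) \<partial>lborel)"
  proof (rule Bochner_Integration.integral_cong[OF refl])
    fix x
    show "G x / q x * (q x - \<alpha>)\<^sup>2 = q x * G x - 2 * \<alpha> * G x + \<alpha>\<^sup>2 * (G x / q x)"
      using q(2)[of x] by (simp add: power2_eq_square field_simps)
  qed
  also have "\<dots> = (\<integral>x. q x * G x - 2 * \<alpha> * G x \<partial>lborel) + (\<integral>x. \<alpha>\<^sup>2 * (G x / q x) \<partial>lborel)"
    using qG_int G_int integrable_mult_right[OF G(2), of "\<alpha>\<^sup>2"]
    by (intro Bochner_Integration.integral_add) auto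
  also have "\<dots> = (\<integral>x. q x * G x \<partial>lborel) - 2 * \<alpha> * \<alpha> + \<alpha>\<^sup>2 * 1"
    using qG_int G_int G(3) integral_mult_right_zero[of lborel "\<alpha>\<^sup>2" "\<lambda>x. G x / q x"]
    unfolding \<alpha>_def by simp
  finally show ?thesis
    unfolding \<alpha>_def by (simp add: power2_eq_square)
qed

lemma integral_one_minus_mult_le:
  fixes G q :: "real \<Rightarrow> real"
  assumes q: "q \<in> borel_measurable lborel" "\<And>x. 0 < q x" "\<And>x. q x \<le> 1"
    and G: "AE x in lborel. G x \<ge> 0" "integrable lborel (\<lambda>x. G x / q x)" "(\<integral>x. G x / q x \<partial>lborel) = 1"
  shows "(\<integral>x. (1 - q x) * G x \<partial>lborel) \<le> (\<integral>x. G x \<partial>lborel) * (1 - (\<integral>x. G x \<partial>lborel))"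
proof -
  have G_int: "integrable lborel G"
    using integrable_if_integrable_divide(1)[OF q G(1,2)] .
  have "(\<integral>x. (1 - q x) * G x \<partial>lborel) = (\<integral>x. G x \<partial>lborel) - (\<integral>x. q x * G x \<partial>lborel)"
    using G_int integrable_weight_mult[OF q G_int] by (simp add: left_diff_distrib)
  then show ?thesis
    using square_integral_le_integral_mult[OF q G] by (simp add: power2_eq_square algebra_simps)
qed

lemma integral_one_minus_mult_pos:
  fixes G q :: "real \<Rightarrow> real"
  assumes q: "q \<in> borel_measurable lborel" "\<And>x. 0 < q x" "\<And>x. q x < 1"
    and G: "AE x in lborel. G x \<ge> 0" "integrable lborel (\<lambda>x. G x / q x)" "(\<integral>x. G x / q x \<partial>lborel) = 1"
  shows "(\<integral>x. (1 - q x) * G x \<partial>lborel) > 0"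
proof -
  have q_le: "q x \<le> 1" for x
    using q(3)[of x] by simp
  have nonneg: "AE x in lborel. 0 \<le> (1 - q x) * G x"
    using G(1) by (rule eventually_mono) (simp add: q_le)
  have int: "integrable lborel (\<lambda>x. (1 - q x) * G x)"
    using integrable_if_integrable_divide(1)[OF q(1,2) q_le G(1,2)] integrable_weight_mult[OF q(1,2) q_le]
    by (simp add: left_diff_distrib)
  have "(\<integral>x. (1 - q x) * G x \<partial>lborel) \<noteq> 0"
  proof
    assume "(\<integral>x. (1 - q x) * G x \<partial>lborel) = 0"
    then have "AE x in lborel. (1 - q x) * G x = 0"
      using integral_nonneg_eq_0_iff_AE[OF int nonneg] by simp
    then have "AE x in lborel. G x / q x = 0"
      by (rule eventually_mono) (use q(3) in \<open>auto simp: less_le\<close>)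
    then have "(\<integral>x. G x / q x \<partial>lborel) = 0"
      by (rule integral_eq_zero_AE)
    then show False
      using G(3) by simp
  qed
  moreover have "(\<integral>x. (1 - q x) * G x \<partial>lborel) \<ge> 0"
    using nonneg by (rule integral_nonneg_AE)
  ultimately show ?thesis
    by simp
qed

section \<open>Decay of the weighted mass\<close>

text \<open>The \<open>+ 1\<close> only keeps the rate positive.\<close>
definition decay_rate :: "real \<Rightarrow> real \<Rightarrow> real \<Rightarrow> real" where
  "decay_rate cp Kc Kd = cp * Kc + Kd * (cp + 2 * cp\<^sup>2) + 1"

locale decay_setting = transition_weight q q1 q2 cp
  for q q1 q2 :: "real \<Rightarrow> real" and cp :: real +
  fixes T Kc Kd :: real and ct dt g0 :: "real \<Rightarrow> real" and g gx gxx gt :: "real \<Rightarrow> real \<Rightarrow> real"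
  assumes T_nonneg: "0 \<le> T"
    and ct_bound: "\<And>t. t \<in> {0..T} \<Longrightarrow> \<bar>ct t\<bar> \<le> Kc"
    and dt_nonneg: "\<And>t. t \<in> {0..T} \<Longrightarrow> 0 \<le> dt t"
    and dt_bound: "\<And>t. t \<in> {0..T} \<Longrightarrow> dt t \<le> Kd"
    and solution: "strong_solution T ct dt q g0 g gx gxx gt"
    and g_nonneg: "\<And>t. t \<in> {0..T} \<Longrightarrow> AE x in lborel. g x t \<ge> 0"
    and g_normalized: "\<And>t. t \<in> {0..T} \<Longrightarrow>
      integrable lborel (\<lambda>x. g x t / q x) \<and> (\<integral>x. g x t / q x \<partial>lborel) = 1"
    and g0_nonneg: "AE x in lborel. g0 x \<ge> 0"
    and g0_normalized: "integrable lborel (\<lambda>x. g0 x / q x)" "(\<integral>x. g0 x / q x \<partial>lborel) = 1"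
begin

abbreviation "c0 \<equiv> decay_rate cp Kc Kd"

lemma q_measurable: "q \<in> borel_measurable lborel"
  by (simp add: borel_measurable_continuous_onI continuous_q)

lemma g_integrable: "t \<in> {0..T} \<Longrightarrow> integrable lborel (\<lambda>x. g x t)"
  and g_mass_le_1: "t \<in> {0..T} \<Longrightarrow> (\<integral>x. g x t \<partial>lborel) \<le> 1"
  using integrable_if_integrable_divide[OF q_measurable q_pos q_le_1 g_nonneg] g_normalized by auto

lemma g0_integrable: "integrable lborel g0"
  using integrable_if_integrable_divide(1)[OF q_measurable q_pos q_le_1 g0_nonneg g0_normalized(1)] .

lemma Kc_nonneg: "0 \<le> Kc" and Kd_nonneg: "0 \<le> Kd"
  using ct_bound[of 0] dt_nonneg[of 0] dt_bound[of 0] T_nonneg by auto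

lemma c0_pos: "0 < c0"
proof -
  have "0 \<le> cp * Kc + Kd * (cp + 2 * cp\<^sup>2)"
    using Kc_nonneg Kd_nonneg cp_nonneg by simp
  then show ?thesis
    unfolding decay_rate_def by linarith
qed

lemma c0_ge:
  assumes "t \<in> {0..T}"
  shows "\<bar>ct t\<bar> * cp + dt t * (cp + 2 * cp\<^sup>2) \<le> c0"
proof -
  have "\<bar>ct t\<bar> * cp \<le> Kc * cp"
    using ct_bound[OF assms] cp_nonneg by (rule mult_right_mono)
  moreover have "dt t * (cp + 2 * cp\<^sup>2) \<le> Kd * (cp + 2 * cp\<^sup>2)"
    using dt_bound[OF assms] cp_nonneg by (intro mult_right_mono) auto
  ultimately show ?thesis
    unfolding decay_rate_def by (simp add: mult.commute[of cp])
qed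

lemma weighted_mass_eq:
  assumes a: "continuous_on UNIV a" "\<And>x. \<bar>a x\<bar> \<le> A" "\<And>x. R < \<bar>x\<bar> \<Longrightarrow> a x = 0"
    and t: "t \<in> {0..T}"
  shows "set_integrable lborel {0..t} (\<lambda>s. \<integral>x. a x * gt x s \<partial>lborel)"
    and "(\<integral>x. a x * g x t \<partial>lborel)
      = (\<integral>x. a x * g0 x \<partial>lborel) + (LINT s:{0..t}|lborel. \<integral>x. a x * gt x s \<partial>lborel)"
proof -
  from solution have g_meas: "(\<lambda>(x, t). g x t) \<in> borel_measurable lborel"
    and gt_meas: "(\<lambda>(x, t). gt x t) \<in> borel_measurable lborel"
    and gt_L2: "set_integrable lborel (UNIV \<times> {0<..<T}) (\<lambda>(x, t). (gt x t)\<^sup>2)"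
    and g_eq: "AE x in lborel. g x t = g0 x + (LINT s:{0..t}|lborel. gt x s)"
    using t unfolding strong_solution_def L2_strip_def by auto
  note Fubini = Fubini_strip[OF gt_meas gt_L2 a, where t=t]
  show "set_integrable lborel {0..t} (\<lambda>s. \<integral>x. a x * gt x s \<partial>lborel)"
    using Fubini(2) t by simp
  have a_g0: "integrable lborel (\<lambda>x. a x * g0 x)"
    using integrable_bounded_continuous_mult[OF g0_integrable a(1,2)] .
  have "(\<integral>x. a x * g x t \<partial>lborel) = (\<integral>x. a x * g0 x + a x * (LINT s:{0..t}|lborel. gt x s) \<partial>lborel)"
  proof (rule integral_cong_AE)
    show "(\<lambda>x. a x * g x t) \<in> borel_measurable lborel"
      using measurable_slice[OF g_meas] a(1)
      by (intro borel_measurable_times) (auto simp: borel_measurable_continuous_onI)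
    show "AE x in lborel. a x * g x t = a x * g0 x + a x * (LINT s:{0..t}|lborel. gt x s)"
      using g_eq by (rule eventually_mono) (simp add: algebra_simps)
  qed (use a_g0 Fubini(1) t in auto)
  also have "\<dots> = (\<integral>x. a x * g0 x \<partial>lborel) + (\<integral>x. a x * (LINT s:{0..t}|lborel. gt x s) \<partial>lborel)"
    using a_g0 Fubini(1) t by simp
  finally show "(\<integral>x. a x * g x t \<partial>lborel)
      = (\<integral>x. a x * g0 x \<partial>lborel) + (LINT s:{0..t}|lborel. \<integral>x. a x * gt x s \<partial>lborel)"
    using Fubini(3) t by simp
qed

lemma weighted_rate_ae_lower_bound:
  assumes \<eta>: "smooth \<eta>" "\<And>x. R < \<bar>x\<bar> \<Longrightarrow> \<eta> x = 0" "\<And>x. \<eta> x \<ge> 0"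
    and B1: "\<And>x. \<bar>deriv \<eta> x\<bar> \<le> B1" and B2: "\<And>x. \<bar>deriv (deriv \<eta>) x\<bar> \<le> B2"
  shows "AE s in lborel. s \<in> {0<..<T} \<longrightarrow> (\<integral>x. \<eta> x * (1 - q x) * gt x s \<partial>lborel)
    \<ge> - c0 * (\<integral>x. \<eta> x * (1 - q x) * g x s \<partial>lborel) - (Kc * B1 + Kd * B2 + 2 * Kd * B1 * cp)"
proof -
  from solution have gt_meas: "(\<lambda>(x, t). gt x t) \<in> borel_measurable lborel"
    and weak: "AE s in lborel. s \<in> {0<..<T} \<longrightarrow>
        weak_deriv (\<lambda>x. g x s) (\<lambda>x. gx x s) \<and> weak_deriv (\<lambda>x. gx x s) (\<lambda>x. gxx x s)"
    and pde: "AE z in lborel. z \<in> UNIV \<times> {0<..<T} \<longrightarrow>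
        (case z of (x, t) \<Rightarrow> gt x t + ct t * q x * gx x t - dt t * q x * gxx x t = 0)"
    unfolding strong_solution_def L2_strip_def by auto
  have B: "0 \<le> B1" "0 \<le> B2"
    using B1[of 0] B2[of 0] by auto
  have "AE s in lborel. AE x in lborel. (x, s) \<in> UNIV \<times> {0<..<T} \<longrightarrow>
      gt x s + ct s * q x * gx x s - dt s * q x * gxx x s = 0"
    using AE_lborel_pair_slices[OF pde] by simp
  with weak show ?thesis
  proof eventually_elim
    case (elim s)
    show ?case
    proof
      assume s: "s \<in> {0<..<T}"
      then have s': "s \<in> {0..T}"
        by auto
      have pde_s: "AE x in lborel. gt x s + ct s * q x * gx x s - dt s * q x * gxx x s = 0"
        using elim(2) s by (auto elim!: eventually_mono)
      have weak_s: "weak_deriv (\<lambda>x. g x s) (\<lambda>x. gx x s)" "weak_deriv (\<lambda>x. gx x s) (\<lambda>x. gxx x s)"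
        using elim(1) s by auto
      note bound = weighted_rate_lower_bound[where R=R, OF weak_s pde_s measurable_slice[OF gt_meas]
          g_nonneg[OF s'] g_integrable[OF s'] \<eta> B1 B2 dt_nonneg[OF s'] c0_ge[OF s']]
      have "(\<bar>ct s\<bar> * B1 + dt s * B2 + 2 * dt s * B1 * cp) * (\<integral>x. g x s \<partial>lborel)
          \<le> (Kc * B1 + Kd * B2 + 2 * Kd * B1 * cp) * 1"
        using ct_bound[OF s'] dt_bound[OF s'] dt_nonneg[OF s'] B cp_nonneg g_mass_le_1[OF s']
          integral_nonneg_AE[OF g_nonneg[OF s']]
        by (intro mult_mono add_mono mult_right_mono mult_left_mono) auto
      then show "(\<integral>x. \<eta> x * (1 - q x) * gt x s \<partial>lborel)
          \<ge> - c0 * (\<integral>x. \<eta> x * (1 - q x) * g x s \<partial>lborel) - (Kc * B1 + Kd * B2 + 2 * Kd * B1 * cp)"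
        using bound by simp
    qed
  qed
qed

lemma weighted_mass_increment:
  assumes a: "continuous_on UNIV a" "\<And>x. \<bar>a x\<bar> \<le> A" "\<And>x. R < \<bar>x\<bar> \<Longrightarrow> a x = 0"
  shows "(\<integral>x. a x * g x 0 \<partial>lborel) = (\<integral>x. a x * g0 x \<partial>lborel)"
    and "continuous_on {0..T} (\<lambda>t. \<integral>x. a x * g x t \<partial>lborel)"
    and "0 \<le> t1 \<Longrightarrow> t2 \<le> T \<Longrightarrow> set_integrable lborel {t1..t2} (\<lambda>s. \<integral>x. a x * gt x s \<partial>lborel)"
    and "0 \<le> t1 \<Longrightarrow> t1 \<le> t2 \<Longrightarrow> t2 \<le> T \<Longrightarrow>
      (\<integral>x. a x * g x t2 \<partial>lborel) - (\<integral>x. a x * g x t1 \<partial>lborel) = (LINT s:{t1..t2}|lborel. \<integral>x. a x * gt x s \<partial>lborel)"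
proof -
  define F where "F s = (\<integral>x. a x * gt x s \<partial>lborel)" for s
  have mass: "set_integrable lborel {0..t} F"
    "(\<integral>x. a x * g x t \<partial>lborel) = (\<integral>x. a x * g0 x \<partial>lborel) + integral {0..t} F" if "t \<in> {0..T}" for t
    using weighted_mass_eq[OF a that] set_borel_integral_eq_integral(2) unfolding F_def by auto
  show "(\<integral>x. a x * g x 0 \<partial>lborel) = (\<integral>x. a x * g0 x \<partial>lborel)"
    using mass(2)[of 0] T_nonneg by simp
  show F_int: "set_integrable lborel {t1..t2} F" if "0 \<le> t1" "t2 \<le> T" for t1 t2
    using mass(1)[of T] T_nonneg that by (auto intro: set_integrable_subset)
  show "continuous_on {0..T} (\<lambda>t. \<integral>x. a x * g x t \<partial>lborel)"
  proof -
    have "continuous_on {0..T} (\<lambda>t. (\<integral>x. a x * g0 x \<partial>lborel) + integral {0..t} F)"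
      using set_borel_integral_eq_integral(1)[OF F_int[of 0 T]]
      by (intro continuous_intros indefinite_integral_continuous_1) simp
    then show ?thesis
      by (rule continuous_on_eq) (simp add: mass(2))
  qed
  assume t: "0 \<le> t1" "t1 \<le> t2" "t2 \<le> T"
  have "(\<integral>x. a x * g x t2 \<partial>lborel) - (\<integral>x. a x * g x t1 \<partial>lborel) = integral {0..t2} F - integral {0..t1} F"
    using mass(2)[of t1] mass(2)[of t2] t by simp
  also have "\<dots> = integral {t1..t2} F"
    using Henstock_Kurzweil_Integration.integral_combine[where a=0 and c=t1 and b=t2 and f=F]
      set_borel_integral_eq_integral(1)[OF F_int[of 0 t2]] t by simp
  also have "\<dots> = (LINT s:{t1..t2}|lborel. F s)"
    using set_borel_integral_eq_integral(2)[OF F_int[of t1 t2]] t by simp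
  finally show "(\<integral>x. a x * g x t2 \<partial>lborel) - (\<integral>x. a x * g x t1 \<partial>lborel)
      = (LINT s:{t1..t2}|lborel. \<integral>x. a x * gt x s \<partial>lborel)"
    unfolding F_def .
qed

lemma cutoff_weighted_mass_lower_bound:
  assumes \<eta>: "smooth \<eta>" "\<And>x. R < \<bar>x\<bar> \<Longrightarrow> \<eta> x = 0" "\<And>x. \<eta> x \<ge> 0"
    and B1: "\<And>x. \<bar>deriv \<eta> x\<bar> \<le> B1" and B2: "\<And>x. \<bar>deriv (deriv \<eta>) x\<bar> \<le> B2"
    and t: "t \<in> {0..T}"
  shows "(\<integral>x. \<eta> x * (1 - q x) * g x t \<partial>lborel)
    \<ge> (\<integral>x. \<eta> x * (1 - q x) * g0 x \<partial>lborel) * exp (- c0 * t) - (Kc * B1 + Kd * B2 + 2 * Kd * B1 * cp) / c0"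
proof -
  define Er where "Er = Kc * B1 + Kd * B2 + 2 * Kd * B1 * cp"
  define a where "a x = \<eta> x * (1 - q x)" for x
  define F where "F s = (\<integral>x. a x * gt x s \<partial>lborel)" for s
  define w where "w t = (\<integral>x. a x * g x t \<partial>lborel) + Er / c0" for t
  have Er: "Er \<ge> 0"
    unfolding Er_def using B1[of 0] B2[of 0] Kc_nonneg Kd_nonneg cp_nonneg by simp
  obtain B0 where B0: "\<And>x. \<bar>\<eta> x\<bar> \<le> B0"
    using smooth_bounded[OF \<eta>(1,2)] by blast
  have a: "continuous_on UNIV a" "\<And>x. \<bar>a x\<bar> \<le> B0" "\<And>x. R < \<bar>x\<bar> \<Longrightarrow> a x = 0"
    unfolding a_def using \<eta> B0 smooth_continuous_on[OF \<eta>(1)] continuous_q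
    by (auto intro!: continuous_intros abs_mult_one_minus_q_le)
  note increment = weighted_mass_increment[where R=R, OF a, folded F_def]
  have w_cont: "continuous_on {0..T} w"
    unfolding w_def using increment(2) by (auto intro!: continuous_intros)
  have "- c0 * (\<integral>x. a x * g x s \<partial>lborel) - Er = - c0 * w s" for s
    using c0_pos by (simp add: w_def algebra_simps)
  then have rate: "AE s in lborel. s \<in> {0<..<T} \<longrightarrow> F s \<ge> - c0 * w s"
    using weighted_rate_ae_lower_bound[where R=R, OF \<eta> B1 B2]
    unfolding F_def a_def Er_def by (simp add: mult.assoc)
  have "w t2 - w t1 \<ge> - c0 * integral {t1..t2} w" if t12: "0 \<le> t1" "t1 \<le> t2" "t2 \<le> T" for t1 t2
  proof -
    have w_int: "set_integrable lborel {t1..t2} w"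
      using w_cont t12 by (intro borel_integrable_atLeastAtMost') (auto intro: continuous_on_subset)
    have "w t2 - w t1 = (LINT s:{t1..t2}|lborel. F s)"
      using increment(4)[OF _ t12] by (simp add: w_def)
    also have "\<dots> \<ge> (LINT s:{t1..t2}|lborel. - c0 * w s)"
    proof (rule set_integral_mono_AE)
      have "AE s in lborel. s \<notin> {0, T}"
        by (rule AE_not_in) (auto intro: countable_imp_null_set_lborel)
      with rate show "AE s\<in>{t1..t2} in lborel. - c0 * w s \<le> F s"
        by eventually_elim (use t12 in auto)
    qed (use increment(3) t12 set_integrable_mult_right[OF w_int, of "- c0"] in auto)
    also have "(LINT s:{t1..t2}|lborel. - c0 * w s) = - c0 * integral {t1..t2} w"
      using set_borel_integral_eq_integral(2)[OF w_int]
        set_integral_mult_right[where a="- c0" and M=lborel and A="{t1..t2}" and f=w] by simp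
    finally show ?thesis .
  qed
  then have "w t \<ge> w 0 * exp (- c0 * t)"
    using gronwall_lower_bound[OF less_imp_le[OF c0_pos] w_cont _ t] by blast
  moreover have "w 0 * exp (- c0 * t) \<ge> (\<integral>x. a x * g0 x \<partial>lborel) * exp (- c0 * t)"
    using increment(1) Er c0_pos unfolding w_def by (simp add: distrib_right)
  ultimately have "(\<integral>x. a x * g x t \<partial>lborel) \<ge> (\<integral>x. a x * g0 x \<partial>lborel) * exp (- c0 * t) - Er / c0"
    unfolding w_def by linarith
  then show ?thesis
    unfolding a_def Er_def .
qed

text \<open>The cutoff error is \<open>O(1/R)\<close>, so it disappears in the limit \<open>R \<rightarrow> \<infinity>\<close>.\<close>
lemma weighted_mass_decay:
  assumes t: "t \<in> {0..T}"
  shows "(\<integral>x. (1 - q x) * g x t \<partial>lborel) \<ge> (\<integral>x. (1 - q x) * g0 x \<partial>lborel) * exp (- c0 * t)"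
proof -
  obtain H0 H1 H2 where H: "H1 \<ge> 0" "H2 \<ge> 0"
    "\<And>R x. R \<ge> 1 \<Longrightarrow> \<bar>deriv (cutoff R) x\<bar> \<le> H1 / R"
    "\<And>R x. R \<ge> 1 \<Longrightarrow> \<bar>deriv (deriv (cutoff R)) x\<bar> \<le> H2 / R"
    using cutoff_bounds by metis
  define E where "E = (Kc * H1 + Kd * H2 + 2 * Kd * H1 * cp) / c0"
  have bound: "(\<integral>x. cutoff (real n + 1) x * ((1 - q x) * g x t) \<partial>lborel)
      \<ge> (\<integral>x. cutoff (real n + 1) x * ((1 - q x) * g0 x) \<partial>lborel) * exp (- c0 * t) - E * (1 / (real n + 1))"
    for n
  proof -
    define R where "R = real n + 1"
    have R: "R \<ge> 1"
      by (simp add: R_def)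
    have "(Kc * (H1 / R) + Kd * (H2 / R) + 2 * Kd * (H1 / R) * cp) / c0 = E * (1 / R)"
      using R c0_pos unfolding E_def by (simp add: field_simps)
    with cutoff_weighted_mass_lower_bound[where R=R, OF smooth_cutoff cutoff_eq_0 cutoff_nonneg H(3)[OF R] H(4)[OF R] t] R
    show ?thesis
      unfolding R_def by (simp add: mult.assoc)
  qed
  have weight: "continuous_on UNIV (\<lambda>x. 1 - q x)" "\<bar>1 - q x\<bar> \<le> 1" for x
    using continuous_q q_pos[of x] q_le_1[of x] by (auto intro!: continuous_intros)
  have "(\<lambda>n. 1 / (real n + 1)) \<longlonglongrightarrow> 0"
    using LIMSEQ_inverse_real_of_nat by (simp add: inverse_eq_divide add.commute)
  then have "(\<lambda>n. (\<integral>x. cutoff (real n + 1) x * ((1 - q x) * g0 x) \<partial>lborel) * exp (- c0 * t) - E * (1 / (real n + 1)))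
      \<longlonglongrightarrow> (\<integral>x. (1 - q x) * g0 x \<partial>lborel) * exp (- c0 * t) - E * 0"
    by (intro tendsto_intros integral_cutoff_tendsto integrable_bounded_continuous_mult[OF g0_integrable weight])
  moreover have "(\<lambda>n. \<integral>x. cutoff (real n + 1) x * ((1 - q x) * g x t) \<partial>lborel)
      \<longlonglongrightarrow> (\<integral>x. (1 - q x) * g x t \<partial>lborel)"
    by (intro integral_cutoff_tendsto integrable_bounded_continuous_mult[OF g_integrable[OF t] weight])
  ultimately show ?thesis
    using bound by (auto intro: LIMSEQ_le)
qed

lemma energy_lower_bound:
  assumes M: "M > 1" and q_lt_1: "\<And>x. q x < 1" and t: "t \<in> {0..T}"
  shows "(M - 1) * (\<integral>x. (1 - q x) * g0 x \<partial>lborel) / 2 * exp (- c0 * t)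
      \<le> (M - 1)\<^sup>2 / 2 * ((\<kappa> - (\<integral>x. g x t \<partial>lborel))\<^sup>2
        + (\<integral>x. g x t \<partial>lborel) * (1 - (\<integral>x. g x t \<partial>lborel)) / (M - 1))"
    and "(M - 1) * (\<integral>x. (1 - q x) * g0 x \<partial>lborel) / 2 * exp (- c0 * t) > 0"
proof -
  define \<alpha> where "\<alpha> = (\<integral>x. g x t \<partial>lborel)"
  define \<beta>0 where "\<beta>0 = (\<integral>x. (1 - q x) * g0 x \<partial>lborel)"
  have "\<beta>0 * exp (- c0 * t) \<le> \<alpha> * (1 - \<alpha>)"
    using weighted_mass_decay[OF t] g_normalized[OF t]
      integral_one_minus_mult_le[OF q_measurable q_pos q_le_1 g_nonneg[OF t]]
    unfolding \<alpha>_def \<beta>0_def by fastforce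
  then have "(M - 1) * \<beta>0 / 2 * exp (- c0 * t) \<le> (M - 1) / 2 * (\<alpha> * (1 - \<alpha>))"
    using M by (simp add: mult_left_mono)
  also have "\<dots> \<le> (M - 1)\<^sup>2 / 2 * (\<kappa> - \<alpha>)\<^sup>2 + (M - 1) / 2 * (\<alpha> * (1 - \<alpha>))"
    by simp
  also have "\<dots> = (M - 1)\<^sup>2 / 2 * ((\<kappa> - \<alpha>)\<^sup>2 + \<alpha> * (1 - \<alpha>) / (M - 1))"
    using M by (simp add: power2_eq_square field_simps)
  finally show "(M - 1) * (\<integral>x. (1 - q x) * g0 x \<partial>lborel) / 2 * exp (- c0 * t)
      \<le> (M - 1)\<^sup>2 / 2 * ((\<kappa> - (\<integral>x. g x t \<partial>lborel))\<^sup>2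
        + (\<integral>x. g x t \<partial>lborel) * (1 - (\<integral>x. g x t \<partial>lborel)) / (M - 1))"
    unfolding \<alpha>_def \<beta>0_def .
  show "(M - 1) * (\<integral>x. (1 - q x) * g0 x \<partial>lborel) / 2 * exp (- c0 * t) > 0"
    using M integral_one_minus_mult_pos[OF q_measurable q_pos q_lt_1 g0_nonneg g0_normalized] by simp
qed

end

section \<open>The regularized coefficient \<open>p\<^sub>\<epsilon>\<close>\<close>

lemma C2_has_real_derivatives:
  assumes "C2 f"
  shows "(f has_real_derivative deriv f x) (at x)"
    and "(deriv f has_real_derivative deriv (deriv f) x) (at x)"
  using assms unfolding C2_def by (auto simp: DERIV_deriv_iff_real_differentiable)

lemma C2_shift_scale:
  assumes p: "C2 p"
  shows "C2 (\<lambda>x. (p x + a) / b)"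
proof -
  have d1: "((\<lambda>x. (p x + a) / b) has_real_derivative deriv p x / b) (at x)" for x
    using DERIV_cdivide[OF DERIV_add[OF C2_has_real_derivatives(1)[OF p] DERIV_const[of a]], of b] by simp
  then have "deriv (\<lambda>x. (p x + a) / b) = (\<lambda>x. deriv p x / b)"
    by (intro ext DERIV_imp_deriv)
  moreover have d2: "((\<lambda>x. deriv p x / b) has_real_derivative deriv (deriv p) x / b) (at x)" for x
    using DERIV_cdivide[OF C2_has_real_derivatives(2)[OF p], of b] .
  then have "deriv (\<lambda>x. deriv p x / b) = (\<lambda>x. deriv (deriv p) x / b)"
    by (intro ext DERIV_imp_deriv)
  moreover have "continuous_on UNIV (\<lambda>x. deriv (deriv p) x / b)"
    using p unfolding C2_def by (cases "b = 0") (auto intro!: continuous_intros)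
  ultimately show ?thesis
    unfolding C2_def using d1 d2 real_differentiable_def by auto
qed

lemma transition_weight_if_C2:
  assumes "C2 q" "\<And>x. 0 < q x" "\<And>x. q x \<le> 1" "0 \<le> cp"
    "\<And>x. \<bar>deriv q x\<bar> \<le> cp * (1 - q x)" "\<And>x. \<bar>deriv (deriv q) x\<bar> \<le> cp * (1 - q x)"
  shows "transition_weight q (deriv q) (deriv (deriv q)) cp"
  using assms C2_has_real_derivatives[OF assms(1)] unfolding C2_def by unfold_locales auto

lemma regularized_coefficient:
  fixes p pe :: "real \<Rightarrow> real" and pmin \<epsilon> cp :: real
  assumes pe_def: "pe = (\<lambda>x. (p x + \<epsilon>) / (1 + \<epsilon>))"
    and p: "C2 p" "mono p" "pmin = (INF x. p x)" "0 \<le> pmin" "\<forall>x. pmin < p x \<and> p x \<le> 1"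
    and \<epsilon>: "\<epsilon> > 0" and cp: "cp \<ge> 0"
    and pe_bounds: "\<forall>x. \<bar>deriv pe x\<bar> \<le> cp * (1 - pe x)" "\<forall>x. \<bar>deriv (deriv pe) x\<bar> \<le> cp * (1 - pe x)"
  shows "transition_weight pe (deriv pe) (deriv (deriv pe)) cp"
    and "pe y < 1"
proof -
  have pe_range: "0 < pe x" "pe x \<le> 1" for x
  proof -
    have "0 < p x" "p x \<le> 1"
      using p(4,5) by (auto intro: le_less_trans)
    then show "0 < pe x" "pe x \<le> 1"
      using \<epsilon> unfolding pe_def by auto
  qed
  show weight: "transition_weight pe (deriv pe) (deriv (deriv pe)) cp"
    using pe_range cp pe_bounds unfolding pe_def
    by (intro transition_weight_if_C2 C2_shift_scale p(1)) auto
  have "mono pe"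
  proof (rule monoI)
    fix x y :: real
    assume "x \<le> y"
    with p(2) have "p x \<le> p y"
      by (rule monoD)
    then show "pe x \<le> pe y"
      using \<epsilon> unfolding pe_def by (simp add: divide_right_mono)
  qed
  moreover have "\<exists>x. p x < 1"
  proof (rule ccontr)
    assume "\<not> (\<exists>x. p x < 1)"
    then have p1: "p x = 1" for x
      using p(5) by (metis not_less order_antisym)
    then have "pmin = 1"
      using p(3) by simp
    then show False
      using p(5) p1 by (metis less_irrefl)
  qed
  then obtain x where "p x < 1" ..
  then have "pe x < 1"
    using \<epsilon> by (simp add: pe_def)
  ultimately show "pe y < 1"
    by (rule transition_weight.q_lt_1[OF weight])
qed

lemma energy_lower_bound_regularized:
  fixes M \<kappa> T pmin \<epsilon> cp :: real and p pe g0 ct dt dt' :: "real \<Rightarrow> real"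
    and g gx gxx gt :: "real \<Rightarrow> real \<Rightarrow> real"
  assumes pe_def: "pe = (\<lambda>x. (p x + \<epsilon>) / (1 + \<epsilon>))"
    and M: "M > 1" and T: "T > 0"
    and p: "C2 p" "mono p" "pmin = (INF x. p x)" "0 \<le> pmin" "\<forall>x. pmin < p x \<and> p x \<le> 1"
    and \<epsilon>: "\<epsilon> > 0" and cp: "cp > 0"
    and pe_bounds: "\<forall>x. \<bar>deriv pe x\<bar> \<le> cp * (1 - pe x)" "\<forall>x. \<bar>deriv (deriv pe) x\<bar> \<le> cp * (1 - pe x)"
    and g0: "AE x in lborel. g0 x \<ge> 0" "integrable lborel (\<lambda>x. g0 x / pe x)" "(\<integral>x. g0 x / pe x \<partial>lborel) = 1"
    and dt_pos: "\<exists>\<delta>>0. \<forall>t\<in>{0..T}. dt t \<ge> \<delta>"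
    and coeff_bound: "\<exists>K. \<forall>t\<in>{0..T}. \<bar>ct t\<bar> + dt t + \<bar>dt' t\<bar> \<le> K"
    and solution: "strong_solution T ct dt pe g0 g gx gxx gt"
    and g: "\<forall>t\<in>{0..T}. AE x in lborel. g x t \<ge> 0"
      "\<forall>t\<in>{0..T}. integrable lborel (\<lambda>x. g x t / pe x) \<and> (\<integral>x. g x t / pe x \<partial>lborel) = 1"
  shows "\<forall>t\<in>{0<..T}.
      (M - 1) * (\<integral>x. (1 - pe x) * g0 x \<partial>lborel) / 2 * exp (- decay_rate cp (SUP t\<in>{0..T}. \<bar>ct t\<bar>) (SUP t\<in>{0..T}. dt t) * t)
        \<le> (M - 1)\<^sup>2 / 2 * ((\<kappa> - (\<integral>x. g x t \<partial>lborel))\<^sup>2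
          + (\<integral>x. g x t \<partial>lborel) * (1 - (\<integral>x. g x t \<partial>lborel)) / (M - 1))
      \<and> (M - 1) * (\<integral>x. (1 - pe x) * g0 x \<partial>lborel) / 2 * exp (- decay_rate cp (SUP t\<in>{0..T}. \<bar>ct t\<bar>) (SUP t\<in>{0..T}. dt t) * t) > 0"
proof -
  note pe = regularized_coefficient[OF pe_def p \<epsilon> less_imp_le[OF cp] pe_bounds]
  interpret transition_weight pe "deriv pe" "deriv (deriv pe)" cp
    by (rule pe(1))
  obtain K where K: "\<And>t. t \<in> {0..T} \<Longrightarrow> \<bar>ct t\<bar> + dt t + \<bar>dt' t\<bar> \<le> K"
    using coeff_bound by blast
  obtain \<delta> where \<delta>: "\<delta> > 0" "\<And>t. t \<in> {0..T} \<Longrightarrow> \<delta> \<le> dt t"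
    using dt_pos by blast
  have dt_nonneg: "0 \<le> dt t" if "t \<in> {0..T}" for t
    using \<delta>(1) \<delta>(2)[OF that] by linarith
  have "\<bar>ct t\<bar> \<le> K" "dt t \<le> K" if "t \<in> {0..T}" for t
    using K[OF that] dt_nonneg[OF that] abs_ge_zero[of "dt' t"] abs_ge_zero[of "ct t"] by linarith+
  then have bdd: "bdd_above ((\<lambda>t. \<bar>ct t\<bar>) ` {0..T})" "bdd_above (dt ` {0..T})"
    by (auto intro!: bdd_aboveI2[where M=K])
  interpret decay_setting pe "deriv pe" "deriv (deriv pe)" cp T "SUP t\<in>{0..T}. \<bar>ct t\<bar>" "SUP t\<in>{0..T}. dt t"
    ct dt g0 g gx gxx gt
  proof unfold_locales
    show "\<bar>ct t\<bar> \<le> (SUP t\<in>{0..T}. \<bar>ct t\<bar>)" "dt t \<le> (SUP t\<in>{0..T}. dt t)" if "t \<in> {0..T}" for t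
      using that bdd by (auto intro: cSUP_upper)
  qed (use T dt_nonneg solution g g0 in auto)
  show ?thesis
    using energy_lower_bound[OF M pe(2)] by auto
qed

theorem corollary4p7:
  "\<exists>C0 :: real \<Rightarrow> real \<Rightarrow> real \<Rightarrow> real.
   \<forall>(M::real) (\<tau>::real) (\<kappa>::real) (T::real) (p::real \<Rightarrow> real) (pmin::real) (\<epsilon>::real)
     (cp::real) (g0::real \<Rightarrow> real) (g0'::real \<Rightarrow> real) (ct::real \<Rightarrow> real) (dt::real \<Rightarrow> real)
     (dt'::real \<Rightarrow> real) (g::real \<Rightarrow> real \<Rightarrow> real) (gx::real \<Rightarrow> real \<Rightarrow> real)
     (gxx::real \<Rightarrow> real \<Rightarrow> real) (gt::real \<Rightarrow> real \<Rightarrow> real).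
   let pe = (\<lambda>x. (p x + \<epsilon>) / (1 + \<epsilon>)) in
   M > 1 \<longrightarrow> \<tau> > 0 \<longrightarrow> 0 < \<kappa> \<longrightarrow> \<kappa> < 1 \<longrightarrow> T > 0 \<longrightarrow>
   C2 p \<longrightarrow> mono p \<longrightarrow> pmin = (INF x. p x) \<longrightarrow> 0 \<le> pmin \<longrightarrow>
   (\<forall>x. pmin < p x \<and> p x \<le> 1) \<longrightarrow>
   \<epsilon> > 0 \<longrightarrow> cp > 0 \<longrightarrow>
   (\<forall>x. \<bar>deriv pe x\<bar> \<le> cp * (1 - pe x)) \<longrightarrow>
   (\<forall>x. \<bar>deriv (deriv pe) x\<bar> \<le> cp * (1 - pe x)) \<longrightarrow>
   H1 g0 g0' \<longrightarrow> (AE x in lborel. g0 x \<ge> 0) \<longrightarrow>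
   integrable lborel (\<lambda>x. g0 x / pe x) \<longrightarrow> (\<integral>x. g0 x / pe x \<partial>lborel) = 1 \<longrightarrow>
   integrable lborel (\<lambda>x. exp (4 * \<bar>x\<bar>) * (g0 x)\<^sup>2 / pe x) \<longrightarrow>
   integrable lborel (\<lambda>x. exp (4 * \<bar>x\<bar>) * (g0' x)\<^sup>2) \<longrightarrow>
   (\<forall>t\<in>{0..T}. (dt has_real_derivative dt' t) (at t within {0..T})) \<longrightarrow>
   (\<exists>\<delta>>0. \<forall>t\<in>{0..T}. dt t \<ge> \<delta>) \<longrightarrow>
   (\<exists>K. \<forall>t\<in>{0..T}. \<bar>ct t\<bar> + dt t + \<bar>dt' t\<bar> \<le> K) \<longrightarrow>
   strong_solution T ct dt pe g0 g gx gxx gt \<longrightarrow>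
   (\<forall>t\<in>{0..T}. AE x in lborel. g x t \<ge> 0) \<longrightarrow>
   (\<forall>t\<in>{0..T}. integrable lborel (\<lambda>x. g x t / pe x) \<and> (\<integral>x. g x t / pe x \<partial>lborel) = 1) \<longrightarrow>
   (let c0 = C0 cp (SUP t\<in>{0..T}. \<bar>ct t\<bar>) (SUP t\<in>{0..T}. dt t);
        \<alpha> = (\<lambda>t. \<integral>x. g x t \<partial>lborel);
        a = (\<lambda>t. \<kappa> - \<alpha> t);
        b = (\<lambda>t. \<alpha> t * (1 - \<alpha> t));
        d = (\<lambda>t. (M - 1)\<^sup>2 / 2 * ((a t)\<^sup>2 + b t / (M - 1)));
        \<beta>0 = (\<integral>x. (1 - pe x) * g0 x \<partial>lborel)
    in \<forall>t\<in>{0<..T}. d t \<ge> (M - 1) * \<beta>0 / 2 * exp (- c0 * t)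
                    \<and> (M - 1) * \<beta>0 / 2 * exp (- c0 * t) > 0)"
  by (intro exI[of _ decay_rate] allI, unfold Let_def, intro impI,
      rule energy_lower_bound_regularized[OF refl]) assumption+

end
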